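(* Consider a stochastic combinatorial semi-bandit in which the outcome distribution satisfies: for all $i\in[n]$ and $\lambda\in\mathbb R$, $\mathbb E[e^{\lambda(X_i-\mu^*_i)}]\le e^{\lambda^2/2}$. Let the actions $A_1,A_2,\dots$ be chosen by any policy (each $A_u$ depending only on past observations), let $t\ge 2$ and $i,j\in[n]$ with $N_{ij,t-1}\ge1$. Then with probability at least $1-10t^{-2}$, $$\big|\Sigma^*_{ij}-\bar\Sigma_{ij,t-1}\big|\le g_{ij}(t)\triangleq 16\left(\frac{3\log t}{N_{ij,t-1}}\vee\sqrt{\frac{3\log t}{N_{ij,t-1}}}\right)+\sqrt{\frac{48\log^2 t}{N_{ij,t-1}N_{i,t-1}}}+\sqrt{\frac{36\log^2 t}{N_{ij,t-1}N_{j,t-1}}}.$$ In particular, defining $\Sigma_{ij,t}\triangleq\bar\Sigma_{ij,t-1}+g_{ij}(t)$, it holds that $0\le\Sigma_{ij,t}-\Sigma^*_{ij}\le 2g_{ij}(t)$ with probability at least $1-10t^{-2}$.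
   Context: Stochastic combinatorial semi-bandit: arms $[n]$, action space $\mathcal A$ of nonempty subsets of $[n]$; i.i.d. outcome vectors $\mathbf X_u\in\mathbb R^n$ with mean $\boldsymbol\mu^*$ and covariance $\boldsymbol\Sigma^*=\mathbb E[(\mathbf X-\boldsymbol\mu^* )(\mathbf X-\boldsymbol\mu^* )^{\mathsf T}]$; at round $u$ the agent plays $A_u\in\mathcal A$ and observes $X_{i,u}$ for $i\in A_u$. Counters: $N_{i,t-1}=\sum_{u\in[t-1]}\mathbb 1\{i\in A_u\}$, $N_{ij,t-1}=\sum_{u\in[t-1]}\mathbb 1\{i,j\in A_u\}$. Empirical mean $\bar\mu_{i,t-1}=\sum_{u\in[t-1]}\mathbb 1\{i\in A_u\}X_{i,u}/N_{i,t-1}$ and empirical covariance $\bar\Sigma_{ij,t-1}=\sum_{u\in[t-1]}\mathbb 1\{i,j\in A_u\}(X_{i,u}-\bar\mu_{i,t-1})(X_{j,u}-\bar\mu_{j,t-1})/N_{ij,t-1}$. $a\vee b=\max(a,b)$. (The paper normalizes the sub-Gaussian constant $\kappa$ to $1$.) *)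

theory Defs
  imports "HOL-Probability.Probability"
begin

text \<open>Rounds are indexed by positive naturals; the history before round t consists of rounds
  1, ..., t-1. Arms are 0, ..., n-1. Outcome vectors are X u w :: nat => real (only the
  coordinates below n matter).\<close>

definition obs :: "(nat \<Rightarrow> 'a \<Rightarrow> nat set) \<Rightarrow> (nat \<Rightarrow> 'a \<Rightarrow> nat \<Rightarrow> real) \<Rightarrow> nat \<Rightarrow> nat \<Rightarrow> 'a \<Rightarrow> real" where
  "obs A X v i w = (if i \<in> A v w then X v w i else 0)"

definition hist_events ::
  "'a measure \<Rightarrow> 'r measure \<Rightarrow> ('a \<Rightarrow> 'r) \<Rightarrow> (nat \<Rightarrow> 'a \<Rightarrow> nat set)
     \<Rightarrow> (nat \<Rightarrow> 'a \<Rightarrow> nat \<Rightarrow> real) \<Rightarrow> nat \<Rightarrow> 'a set set" where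
  "hist_events M MR R A X u = sigma_sets (space M)
     ({R -` B \<inter> space M | B. B \<in> sets MR}
      \<union> {A v -` {S} \<inter> space M | v S. v < u}
      \<union> {(\<lambda>w. obs A X v i w) -` B \<inter> space M | v i B. v < u \<and> B \<in> sets borel})"

definition Ncnt :: "(nat \<Rightarrow> 'a \<Rightarrow> nat set) \<Rightarrow> nat \<Rightarrow> nat \<Rightarrow> 'a \<Rightarrow> nat" where
  "Ncnt A t i w = card {u \<in> {1..<t}. i \<in> A u w}"

definition Npair :: "(nat \<Rightarrow> 'a \<Rightarrow> nat set) \<Rightarrow> nat \<Rightarrow> nat \<Rightarrow> nat \<Rightarrow> 'a \<Rightarrow> nat" where
  "Npair A t i j w = card {u \<in> {1..<t}. i \<in> A u w \<and> j \<in> A u w}"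

definition emp_mean :: "(nat \<Rightarrow> 'a \<Rightarrow> nat set) \<Rightarrow> (nat \<Rightarrow> 'a \<Rightarrow> nat \<Rightarrow> real) \<Rightarrow> nat \<Rightarrow> nat \<Rightarrow> 'a \<Rightarrow> real" where
  "emp_mean A X t i w =
     (\<Sum>u\<in>{1..<t}. (if i \<in> A u w then X u w i else 0)) / real (Ncnt A t i w)"

definition emp_cov :: "(nat \<Rightarrow> 'a \<Rightarrow> nat set) \<Rightarrow> (nat \<Rightarrow> 'a \<Rightarrow> nat \<Rightarrow> real) \<Rightarrow> nat \<Rightarrow> nat \<Rightarrow> nat \<Rightarrow> 'a \<Rightarrow> real" where
  "emp_cov A X t i j w =
     (\<Sum>u\<in>{1..<t}. (if i \<in> A u w \<and> j \<in> A u w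
        then (X u w i - emp_mean A X t i w) * (X u w j - emp_mean A X t j w) else 0))
     / real (Npair A t i j w)"

definition gwidth :: "(nat \<Rightarrow> 'a \<Rightarrow> nat set) \<Rightarrow> nat \<Rightarrow> nat \<Rightarrow> nat \<Rightarrow> 'a \<Rightarrow> real" where
  "gwidth A t i j w =
     (let Nij = real (Npair A t i j w); Ni = real (Ncnt A t i w); Nj = real (Ncnt A t j w);
          L = ln (real t)
      in 16 * max (3 * L / Nij) (sqrt (3 * L / Nij))
         + sqrt (48 * L^2 / (Nij * Ni)) + sqrt (36 * L^2 / (Nij * Nj)))"

end

theory Submission
  imports Defs
begin

text \<open>Write \<open>x\<^sub>v = X\<^sub>v\<^sub>i - \<mu>\<^sub>i\<close> and \<open>y\<^sub>v = X\<^sub>v\<^sub>j - \<mu>\<^sub>j\<close>. Over the rounds in which both arms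
  were played, the empirical covariance differs from \<open>\<Sigma>\<^sub>i\<^sub>j\<close> by the average of
  \<open>x\<^sub>v y\<^sub>v - \<Sigma>\<^sub>i\<^sub>j\<close> plus products of averages of \<open>x\<close> and \<open>y\<close> over three sets of rounds, so it
  suffices that five sums over adaptively selected rounds stay below suitable thresholds. The
  \<open>x\<^sub>v\<close> and \<open>y\<^sub>v\<close> are sub-Gaussian, and the centred products satisfy
  \<open>E exp (l (x y - \<Sigma>)) \<le> exp (49 l\<^sup>2)\<close> for \<open>\<bar>l\<bar> \<le> 1/7\<close>, by dominating \<open>exp (c x\<^sup>2)\<close> with a
  lattice sum of exponentials. Whether a round is selected is decided by the past, while its
  outcome is independent of the past, so \<open>exp (l * sum - \<psi> * count)\<close> is a supermartingale.
  Markov's inequality bounds each deviation by \<open>t\<^sup>-\<^sup>3\<close> for every value of the count and either sign,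
  and a union bound over counts below \<open>t\<close>, both signs and the five sums gives
  \<open>10 (t - 1) / t\<^sup>3 \<le> 10 / t\<^sup>2\<close>.\<close>

lemma exp_le_quadratic_remainder: "exp (z :: real) \<le> 1 + z + z\<^sup>2 / 2 * exp \<bar>z\<bar>"
proof -
  obtain \<xi> where \<xi>: "\<bar>\<xi>\<bar> \<le> \<bar>z\<bar>" "exp z = (\<Sum>m<2. z ^ m / fact m) + exp \<xi> / fact 2 * z ^ 2"
    using Maclaurin_exp_le[of z 2] by blast
  have "exp z = 1 + z + exp \<xi> / 2 * z\<^sup>2"
    using \<xi>(2) by (simp add: eval_nat_numeral)
  moreover have "exp \<xi> \<le> exp \<bar>z\<bar>"
    using \<xi>(1) by simp
  ultimately show ?thesis
    by (simp add: mult_right_mono mult.commute)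
qed

lemma square_le_exp_plus_exp_minus: "(x :: real)\<^sup>2 \<le> exp x + exp (- x) - 2"
proof -
  obtain \<xi> where \<xi>: "exp x = (\<Sum>m<4. x ^ m / fact m) + exp \<xi> / fact 4 * x ^ 4"
    using Maclaurin_exp_le[of x 4] by blast
  obtain \<eta> where \<eta>: "exp (- x) = (\<Sum>m<4. (- x) ^ m / fact m) + exp \<eta> / fact 4 * (- x) ^ 4"
    using Maclaurin_exp_le[of "- x" 4] by blast
  have "exp x + exp (- x) = 2 + x\<^sup>2 + (exp \<xi> + exp \<eta>) / 24 * x ^ 4"
    unfolding \<xi> \<eta> by (simp add: eval_nat_numeral field_simps)
  moreover have "0 \<le> (exp \<xi> + exp \<eta>) / 24 * x ^ 4"
    by (simp add: add_nonneg_nonneg)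
  ultimately show ?thesis
    by linarith
qed

lemma square_le_exp_abs: "(w :: real)\<^sup>2 \<le> 64 / exp 2 * exp (\<bar>w\<bar> / 4)"
proof -
  define u where "u = \<bar>w\<bar> / 8"
  have "u * exp 1 \<le> exp u"
    using exp_ge_add_one_self[of "u - 1"] by (simp add: exp_diff field_simps)
  then have "(u * exp 1)\<^sup>2 \<le> (exp u)\<^sup>2"
    by (intro power_mono) (auto simp: u_def)
  moreover have "exp (2 :: real) = exp 1 * exp 1" and "(exp u)\<^sup>2 = exp (2 * u)"
    by (simp_all add: power2_eq_square flip: exp_add)
  ultimately have "u\<^sup>2 * exp 2 \<le> exp (2 * u)"
    by (simp add: power_mult_distrib power2_eq_square mult_ac)
  then show ?thesis
    by (simp add: u_def pos_le_divide_eq power_divide)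
qed

lemma exp_midpoint_le: "exp ((a + b) / 2 :: real) \<le> (exp a + exp b) / 2"
  using convex_onD[OF exp_convex, of "1/2" a b] by (simp add: field_simps)

lemma exp_half_le: "exp (1/2 :: real) \<le> 33/20"
proof (rule power2_le_imp_le)
  have "(exp (1/2 :: real))\<^sup>2 = exp 1"
    by (simp add: power2_eq_square mult_exp_exp)
  then show "(exp (1/2 :: real))\<^sup>2 \<le> (33/20)\<^sup>2"
    using e_less_272 by (simp add: power2_eq_square)
qed simp

lemma ex_nat_square_le_lattice:
  fixes c h x :: real
  assumes c: "c > 0" and h: "h > 0"
  shows "\<exists>k::nat. c * x\<^sup>2 \<le> h\<^sup>2 / (16 * c) + (real k * h * \<bar>x\<bar> - (real k)\<^sup>2 * h\<^sup>2 / (4 * c))"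
proof -
  define r where "r = 2 * c * \<bar>x\<bar> / h"
  define k where "k = nat \<lfloor>r + 1/2\<rfloor>"
  have "r \<ge> 0"
    using c h by (simp add: r_def)
  then have "\<bar>real k - r\<bar> \<le> 1/2"
    unfolding k_def by linarith
  then have "\<bar>real k - r\<bar>\<^sup>2 \<le> (1/2)\<^sup>2"
    by (intro power_mono) auto
  then have "h\<^sup>2 * (real k - r)\<^sup>2 \<le> h\<^sup>2 * (1/2)\<^sup>2"
    by (intro mult_left_mono) auto
  moreover have "h\<^sup>2 * (real k - r)\<^sup>2 = (real k * h - 2 * c * \<bar>x\<bar>)\<^sup>2"
    using h by (simp add: r_def power2_eq_square field_simps)
  ultimately have "(real k * h - 2 * c * \<bar>x\<bar>)\<^sup>2 / (4 * c) \<le> h\<^sup>2 / (16 * c)"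
    using c by (simp add: field_simps)
  moreover have "(real k * h - 2 * c * \<bar>x\<bar>)\<^sup>2 / (4 * c)
      = (real k)\<^sup>2 * h\<^sup>2 / (4 * c) - real k * h * \<bar>x\<bar> + c * x\<^sup>2"
    using c by (simp add: field_simps power2_eq_square)
  ultimately have "c * x\<^sup>2 \<le> h\<^sup>2 / (16 * c) + (real k * h * \<bar>x\<bar> - (real k)\<^sup>2 * h\<^sup>2 / (4 * c))"
    by linarith
  then show ?thesis ..
qed

text \<open>Completing the square around the integer \<open>k\<close> nearest to \<open>2 c \<bar>x\<bar> / h\<close> dominates the
  Gaussian \<open>exp (c x\<^sup>2)\<close> by a single term of a lattice sum of exponentials.\<close>

lemma exp_square_le_lattice_sum:
  fixes c h x :: real
  assumes c: "c > 0" and h: "h > 0"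
  shows "ennreal (exp (c * x\<^sup>2)) \<le> ennreal (exp (h\<^sup>2 / (16 * c))) *
     (1 + (\<Sum>k. ennreal (exp (- ((real (Suc k))\<^sup>2 * h\<^sup>2 / (4 * c))) *
        (exp (real (Suc k) * h * x) + exp (- (real (Suc k) * h * x))))))"
    (is "_ \<le> ?C * (1 + (\<Sum>k. ?f k))")
proof -
  obtain k :: nat where key: "c * x\<^sup>2 \<le> h\<^sup>2 / (16 * c) + (real k * h * \<bar>x\<bar> - (real k)\<^sup>2 * h\<^sup>2 / (4 * c))"
    using ex_nat_square_le_lattice[OF c h] by blast
  show ?thesis
  proof (cases k)
    case 0
    then have "ennreal (exp (c * x\<^sup>2)) \<le> ?C * 1"
      using key by (simp add: ennreal_leI)
    also have "\<dots> \<le> ?C * (1 + (\<Sum>k. ?f k))"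
      by (intro mult_left_mono add_increasing2) simp_all
    finally show ?thesis .
  next
    case (Suc k')
    define a where "a = real (Suc k') * h"
    have "exp (c * x\<^sup>2) \<le> exp (h\<^sup>2 / (16 * c)) * exp (a * \<bar>x\<bar> - a\<^sup>2 / (4 * c))"
      using key by (simp add: Suc a_def power_mult_distrib flip: exp_add)
    also have "\<dots> = exp (h\<^sup>2 / (16 * c)) * (exp (- (a\<^sup>2 / (4 * c))) * exp (a * \<bar>x\<bar>))"
      by (simp add: exp_diff exp_minus field_simps)
    also have "\<dots> \<le> exp (h\<^sup>2 / (16 * c)) * (exp (- (a\<^sup>2 / (4 * c))) * (exp (a * x) + exp (- (a * x))))"
      by (intro mult_left_mono) (auto simp: abs_if)
    finally have bound: "ennreal (exp (c * x\<^sup>2)) \<le> ?C * ?f k'"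
      by (simp add: a_def power_mult_distrib ennreal_mult[symmetric] ennreal_leI)
    have "?f k' \<le> (\<Sum>k. ?f k)"
      using ennreal_suminf_lessD not_less by blast
    then have "?C * ?f k' \<le> ?C * (1 + (\<Sum>k. ?f k))"
      by (intro mult_left_mono add_increasing) simp_all
    with bound show ?thesis
      by (rule order_trans)
  qed
qed

lemma product_mgf_constant_le:
  "64 / exp 2 * exp (33/56) * (exp (7/12) * (1 + 2 * exp (1/2) / (exp 1 - 1))) \<le> (98 :: real)"
proof -
  have "exp (1 :: real) \<ge> 5/2"
    using exp_lower_Taylor_quadratic[of 1] by simp
  then have A: "1 + 2 * exp (1/2) / (exp 1 - 1) \<le> (1 + 2 * (33/20) / (3/2) :: real)"
    using exp_half_le by (intro add_left_mono frac_le) auto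
  have "64 / exp 2 * exp (33/56) * exp (7/12) = 64 / exp (139/168 :: real)"
    by (simp add: exp_add[symmetric] exp_diff[symmetric] field_simps exp_minus)
  also have "\<dots> \<le> 64 / (1 + 139/168 + (139/168)\<^sup>2 / 2)"
    using exp_lower_Taylor_quadratic[of "139/168 :: real"]
    by (intro divide_left_mono) (auto intro!: mult_pos_pos add_pos_nonneg)
  finally have B: "64 / exp 2 * exp (33/56) * exp (7/12) \<le> 64 / (1 + 139/168 + (139/168)\<^sup>2 / 2 :: real)" .
  have "64 / exp 2 * exp (33/56) * (exp (7/12) * (1 + 2 * exp (1/2) / (exp 1 - 1)))
      \<le> 64 / (1 + 139/168 + (139/168)\<^sup>2 / 2 :: real) * (1 + 2 * (33/20) / (3/2))"
    unfolding mult.assoc[symmetric] using A B by (intro mult_mono) (auto intro: add_nonneg_nonneg)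
  also have "\<dots> \<le> 98"
    by (simp add: power2_eq_square)
  finally show ?thesis .
qed

lemma exp_mul_le_quadratic_bound:
  fixes l W :: real
  assumes l: "\<bar>l\<bar> \<le> 1/7"
  shows "exp (l * W) \<le> 1 + l * W + l\<^sup>2 / 2 * (64 / exp 2 * exp (11/28 * \<bar>W\<bar>))"
proof -
  have "\<bar>l * W\<bar> \<le> \<bar>W\<bar> / 7"
    using mult_right_mono[OF l abs_ge_zero[of W]] by (simp add: abs_mult)
  then have "l\<^sup>2 / 2 * W\<^sup>2 * exp \<bar>l * W\<bar> \<le> l\<^sup>2 / 2 * W\<^sup>2 * exp (\<bar>W\<bar> / 7)"
    by (intro mult_left_mono) auto
  then have "(l * W)\<^sup>2 / 2 * exp \<bar>l * W\<bar> \<le> l\<^sup>2 / 2 * (W\<^sup>2 * exp (\<bar>W\<bar> / 7))"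
    by (simp add: power_mult_distrib mult.assoc)
  also have "\<dots> \<le> l\<^sup>2 / 2 * (64 / exp 2 * exp (\<bar>W\<bar> / 4) * exp (\<bar>W\<bar> / 7))"
    using square_le_exp_abs[of W] by (intro mult_left_mono mult_right_mono) auto
  also have "64 / exp 2 * exp (\<bar>W\<bar> / 4) * exp (\<bar>W\<bar> / 7) = 64 / exp 2 * exp (11/28 * \<bar>W\<bar>)"
    by (simp add: mult.assoc flip: exp_add)
  finally show ?thesis
    using exp_le_quadratic_remainder[of "l * W"] by linarith
qed

lemma chernoff_exponent_product:
  fixes m :: nat and L :: real
  assumes m: "m \<ge> 1" and L: "L \<ge> 0"
  defines "\<epsilon> \<equiv> 14 * max (3 * L / m) (sqrt (3 * L / m))"
  shows "real m * (49 * (min (\<epsilon> / 98) (1/7))\<^sup>2) - min (\<epsilon> / 98) (1/7) * (real m * \<epsilon>) \<le> - (3 * L)"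
proof -
  have m0: "real m > 0"
    using m by simp
  have e1: "\<epsilon> \<ge> 14 * (3 * L / m)" and e2: "\<epsilon> \<ge> 14 * sqrt (3 * L / m)"
    unfolding \<epsilon>_def by auto
  show ?thesis
  proof (cases "\<epsilon> \<le> 14")
    case True
    then have l: "min (\<epsilon> / 98) (1/7) = \<epsilon> / 98"
      by (simp add: min_def)
    have "(14 * sqrt (3 * L / m))\<^sup>2 \<le> \<epsilon>\<^sup>2"
      using e2 L m0 by (intro power_mono) auto
    then have "196 * (3 * L / m) \<le> \<epsilon>\<^sup>2"
      using L m0 by (simp add: power_mult_distrib)
    then have "588 * L \<le> real m * \<epsilon>\<^sup>2"
      using m0 by (simp add: field_simps)
    moreover have "real m * (49 * (\<epsilon> / 98)\<^sup>2) - \<epsilon> / 98 * (real m * \<epsilon>) = - (real m * \<epsilon>\<^sup>2 / 196)"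
      by (simp add: power2_eq_square field_simps)
    ultimately show ?thesis
      unfolding l by linarith
  next
    case False
    then have l: "min (\<epsilon> / 98) (1/7) = 1/7"
      by (simp add: min_def)
    have "42 * L \<le> real m * \<epsilon>"
      using mult_left_mono[OF e1, of "real m"] m0 by (simp add: field_simps)
    moreover have "real m * (49 * (1/7)\<^sup>2) - 1/7 * (real m * \<epsilon>) = real m * (1 - \<epsilon> / 7)"
      by (simp add: power2_eq_square field_simps)
    moreover have "real m * (1 - \<epsilon> / 7) \<le> real m * (- \<epsilon> / 14)"
      using False m0 by (intro mult_left_mono) auto
    ultimately show ?thesis
      unfolding l by linarith
  qed
qed

lemma exp_neg_three_ln:
  fixes x :: real
  assumes "x > 0"
  shows "exp (- (3 * ln x)) = 1 / x ^ 3"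
proof -
  have "3 * ln x = ln (x ^ 3)"
    using assms by (simp add: ln_realpow)
  then have "exp (3 * ln x) = x ^ 3"
    using assms by simp
  then show ?thesis
    by (simp add: exp_minus inverse_eq_divide)
qed

lemma abs_mult_le_sqrt_mult:
  fixes a b p q :: real
  assumes "\<bar>a\<bar> \<le> sqrt p" "\<bar>b\<bar> \<le> sqrt q"
  shows "\<bar>a * b\<bar> \<le> sqrt (p * q)"
  using mult_mono[OF assms order_trans[OF abs_ge_zero assms(1)] abs_ge_zero]
  by (simp add: abs_mult real_sqrt_mult)

section \<open>Sub-Gaussian variables and their products\<close>

definition mgf_le :: "'a measure \<Rightarrow> ('a \<Rightarrow> real) \<Rightarrow> real \<Rightarrow> real \<Rightarrow> bool" where
  "mgf_le M Z l c \<longleftrightarrow> integrable M (\<lambda>w. exp (l * Z w)) \<and> (\<integral>w. exp (l * Z w) \<partial>M) \<le> exp c"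

definition subgaussian :: "'a measure \<Rightarrow> ('a \<Rightarrow> real) \<Rightarrow> bool" where
  "subgaussian M Z \<longleftrightarrow> (\<forall>s. mgf_le M Z s (s\<^sup>2 / 2))"

lemma mgf_le_cmult: "mgf_le M (\<lambda>w. a * Z w) l c \<longleftrightarrow> mgf_le M Z (l * a) c"
  unfolding mgf_le_def by (simp add: mult.assoc)

lemma (in prob_space) nn_integral_exp_le_1_of_mgf_le:
  assumes "mgf_le M Z l \<psi>"
  shows "(\<integral>\<^sup>+w. ennreal (exp (l * Z w - \<psi>)) \<partial>M) \<le> 1"
proof -
  have int: "integrable M (\<lambda>w. exp (l * Z w))" and I: "(\<integral>w. exp (l * Z w) \<partial>M) \<le> exp \<psi>"
    using assms by (simp_all add: mgf_le_def)
  have "(\<integral>\<^sup>+w. ennreal (exp (l * Z w - \<psi>)) \<partial>M) = ennreal (\<integral>w. exp (l * Z w) * exp (- \<psi>) \<partial>M)"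
    using int by (subst nn_integral_eq_integral[symmetric]) (auto simp: exp_diff exp_minus field_simps)
  also have "\<dots> \<le> ennreal (exp \<psi> * exp (- \<psi>))"
    using I by (intro ennreal_leI) simp
  finally show ?thesis
    by (simp flip: exp_add)
qed

lemma subgaussian_uminus:
  assumes "subgaussian M Z"
  shows "subgaussian M (\<lambda>w. - Z w)"
  unfolding subgaussian_def
proof
  fix s :: real
  have "mgf_le M Z (- s) ((- s)\<^sup>2 / 2)"
    using assms unfolding subgaussian_def by blast
  then show "mgf_le M (\<lambda>w. - Z w) s (s\<^sup>2 / 2)"
    by (simp add: mgf_le_def)
qed

lemma subgaussian_second_moment:
  assumes "prob_space M" and Z: "Z \<in> borel_measurable M" and "subgaussian M Z"
  shows "integrable M (\<lambda>w. (Z w)\<^sup>2)" and "(\<integral>w. (Z w)\<^sup>2 \<partial>M) \<le> 13/10"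
proof -
  interpret prob_space M by fact
  have "mgf_le M Z s (s\<^sup>2 / 2)" for s
    using \<open>subgaussian M Z\<close> unfolding subgaussian_def by blast
  from this[of 1] this[of "-1"]
  have mgf: "integrable M (\<lambda>w. exp (Z w))" "(\<integral>w. exp (Z w) \<partial>M) \<le> exp (1/2)"
    "integrable M (\<lambda>w. exp (- Z w))" "(\<integral>w. exp (- Z w) \<partial>M) \<le> exp (1/2)"
    by (simp_all add: mgf_le_def)
  then have cosh: "integrable M (\<lambda>w. exp (Z w) + exp (- Z w) - 2)"
    by auto
  show int: "integrable M (\<lambda>w. (Z w)\<^sup>2)"
    by (rule Bochner_Integration.integrable_bound[OF cosh])
      (use Z in \<open>auto intro!: AE_I2 intro: order_trans[OF square_le_exp_plus_exp_minus abs_ge_self]\<close>)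
  have "(\<integral>w. (Z w)\<^sup>2 \<partial>M) \<le> (\<integral>w. exp (Z w) + exp (- Z w) - 2 \<partial>M)"
    using int cosh square_le_exp_plus_exp_minus by (intro integral_mono) auto
  also have "\<dots> = (\<integral>w. exp (Z w) \<partial>M) + (\<integral>w. exp (- Z w) \<partial>M) - 2"
    using mgf by (simp add: prob_space)
  also have "\<dots> \<le> 2 * exp (1/2) - 2"
    using mgf by simp
  also have "\<dots> \<le> 13/10"
    using exp_half_le by simp
  finally show "(\<integral>w. (Z w)\<^sup>2 \<partial>M) \<le> 13/10" .
qed

lemma subgaussian_lattice_term_le:
  assumes "prob_space M" and subg: "subgaussian M Z" and h: "h\<^sup>2 = 11/3" and c: "c = 11/28"
  shows "(\<integral>\<^sup>+w. ennreal (exp (- ((real (Suc k))\<^sup>2 * h\<^sup>2 / (4 * c))) *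
      (exp (real (Suc k) * h * Z w) + exp (- (real (Suc k) * h * Z w)))) \<partial>M)
    \<le> ennreal (2 * exp (1/2) * exp (- real (Suc k)))"
proof -
  interpret prob_space M by fact
  define s where "s = real (Suc k) * h"
  define K where "K = (real (Suc k))\<^sup>2"
  define a where "a = exp (- ((real (Suc k))\<^sup>2 * h\<^sup>2 / (4 * c)))"
  have "mgf_le M Z s (s\<^sup>2 / 2)" "mgf_le M Z (- s) ((- s)\<^sup>2 / 2)"
    using subg unfolding subgaussian_def by blast+
  then have i1: "integrable M (\<lambda>w. exp (s * Z w))" and i2: "integrable M (\<lambda>w. exp (- (s * Z w)))"
    and I1: "(\<integral>w. exp (s * Z w) \<partial>M) \<le> exp (s\<^sup>2 / 2)"
    and I2: "(\<integral>w. exp (- (s * Z w)) \<partial>M) \<le> exp (s\<^sup>2 / 2)"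
    by (simp_all add: mgf_le_def)
  have "(\<integral>w. a * (exp (s * Z w) + exp (- (s * Z w))) \<partial>M)
      = a * ((\<integral>w. exp (s * Z w) \<partial>M) + (\<integral>w. exp (- (s * Z w)) \<partial>M))"
    using i1 i2 by simp
  also have "\<dots> \<le> a * (exp (s\<^sup>2 / 2) + exp (s\<^sup>2 / 2))"
    using I1 I2 by (intro mult_left_mono add_mono) (auto simp: a_def)
  also have "\<dots> = 2 * (exp (- (7/3 * K)) * exp (11/6 * K))"
  proof -
    have a: "(real (Suc k))\<^sup>2 * h\<^sup>2 / (4 * c) = 7/3 * K" and s: "s\<^sup>2 / 2 = 11/6 * K"
      by (simp_all add: K_def s_def h c power_mult_distrib)
    show ?thesis
      unfolding a_def a s by simp
  qed
  also have "\<dots> = 2 * exp (- K / 2)"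
    by (simp flip: exp_add)
  also have "\<dots> \<le> 2 * exp (1/2) * exp (- real (Suc k))"
  proof -
    have "K = real k * real k + 2 * real k + 1"
      by (simp add: K_def power2_eq_square algebra_simps)
    then have "- K / 2 \<le> 1/2 + - real (Suc k)"
      using zero_le_square[of "real k"] of_nat_Suc[of k] by linarith
    then show ?thesis
      by (simp flip: exp_add)
  qed
  finally have "(\<integral>w. a * (exp (s * Z w) + exp (- (s * Z w))) \<partial>M) \<le> 2 * exp (1/2) * exp (- real (Suc k))" .
  moreover have "(\<integral>\<^sup>+w. ennreal (a * (exp (s * Z w) + exp (- (s * Z w)))) \<partial>M)
      = ennreal (\<integral>w. a * (exp (s * Z w) + exp (- (s * Z w))) \<partial>M)"
    using i1 i2 by (intro nn_integral_eq_integral) (auto simp: a_def)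
  ultimately show ?thesis
    by (simp add: a_def s_def ennreal_leI)
qed

lemma suminf_exp_minus_Suc:
  "(\<Sum>k. ennreal (2 * exp (1/2) * exp (- real (Suc k)))) = ennreal (2 * exp (1/2) / (exp 1 - 1))"
proof -
  have "norm (exp (-1 :: real)) < 1"
    by simp
  then have "(\<lambda>k. 2 * exp (1/2) * exp (-1) * exp (-1) ^ k :: real) sums (2 * exp (1/2) * exp (-1) * (1 / (1 - exp (-1))))"
    by (rule sums_mult[OF geometric_sums])
  moreover have "2 * exp (1/2) * exp (-1) * exp (-1) ^ k = 2 * exp (1/2) * exp (- real (Suc k))" for k
    by (simp add: exp_of_nat_mult[symmetric] mult_exp_exp algebra_simps flip: exp_add)
  moreover have "2 * exp (1/2) * exp (-1) * (1 / (1 - exp (-1))) = 2 * exp (1/2) / (exp 1 - 1 :: real)"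
    by (simp add: exp_minus field_simps)
  ultimately show ?thesis
    by (intro suminf_ennreal_eq) auto
qed

text \<open>The exponent \<open>11/28 = 1/4 + 1/7\<close> is the one needed in \<open>exp_mul_centred_product_le\<close>;
  \<open>h\<^sup>2 = 11/3\<close> makes the lattice weights beat the sub-Gaussian moment bounds
  (\<open>subgaussian_lattice_term_le\<close>).\<close>

lemma subgaussian_exp_square:
  assumes "prob_space M" and Z: "Z \<in> borel_measurable M" and subg: "subgaussian M Z"
  shows "integrable M (\<lambda>w. exp (11/28 * (Z w)\<^sup>2))"
    and "(\<integral>w. exp (11/28 * (Z w)\<^sup>2) \<partial>M) \<le> exp (7/12) * (1 + 2 * exp (1/2) / (exp 1 - 1))"
proof -
  interpret prob_space M by fact
  define h where "h = sqrt (11/3 :: real)"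
  define c :: real where "c = 11/28"
  define G where "G = 2 * exp (1/2) / (exp 1 - 1 :: real)"
  have h: "h > 0" "h\<^sup>2 = 11/3" and c: "c > 0"
    by (auto simp: h_def c_def)
  have G: "G \<ge> 0"
    by (simp add: G_def one_less_exp_iff)
  define f where "f k w = ennreal (exp (- ((real (Suc k))\<^sup>2 * h\<^sup>2 / (4 * c))) *
      (exp (real (Suc k) * h * Z w) + exp (- (real (Suc k) * h * Z w))))" for k w
  have f_meas: "f k \<in> borel_measurable M" for k
    unfolding f_def using Z by measurable
  have "(\<Sum>k. \<integral>\<^sup>+w. f k w \<partial>M) \<le> (\<Sum>k. ennreal (2 * exp (1/2) * exp (- real (Suc k))))"
    unfolding f_def using subgaussian_lattice_term_le[OF \<open>prob_space M\<close> subg h(2) c_def]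
    by (intro suminf_le) auto
  then have sum_le: "(\<Sum>k. \<integral>\<^sup>+w. f k w \<partial>M) \<le> ennreal G"
    unfolding suminf_exp_minus_Suc G_def .
  have "(\<integral>\<^sup>+w. ennreal (exp (c * (Z w)\<^sup>2)) \<partial>M) \<le> (\<integral>\<^sup>+w. ennreal (exp (h\<^sup>2 / (16 * c))) * (1 + (\<Sum>k. f k w)) \<partial>M)"
    unfolding f_def using c h by (intro nn_integral_mono exp_square_le_lattice_sum)
  also have "h\<^sup>2 / (16 * c) = 7/12"
    by (simp add: h c_def)
  also have "(\<integral>\<^sup>+w. ennreal (exp (7/12)) * (1 + (\<Sum>k. f k w)) \<partial>M)
      = ennreal (exp (7/12)) * (1 + (\<Sum>k. \<integral>\<^sup>+w. f k w \<partial>M))"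
    using f_meas by (simp add: nn_integral_cmult nn_integral_add nn_integral_suminf emeasure_space_1)
  also have "\<dots> \<le> ennreal (exp (7/12)) * (1 + ennreal G)"
    using sum_le by (intro mult_left_mono add_left_mono) auto
  also have "\<dots> = ennreal (exp (7/12) * (1 + G))"
    using G by (simp add: ennreal_mult ennreal_plus)
  finally have nn: "(\<integral>\<^sup>+w. ennreal (exp (c * (Z w)\<^sup>2)) \<partial>M) \<le> ennreal (exp (7/12) * (1 + G))" .
  show int: "integrable M (\<lambda>w. exp (11/28 * (Z w)\<^sup>2))"
    by (rule integrableI_nonneg) (use Z nn in \<open>auto simp: c_def top.not_eq_extremum order.strict_trans1\<close>)
  have "ennreal (\<integral>w. exp (11/28 * (Z w)\<^sup>2) \<partial>M) \<le> ennreal (exp (7/12) * (1 + G))"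
    using nn nn_integral_eq_integral[OF int] by (simp add: c_def)
  then show "(\<integral>w. exp (11/28 * (Z w)\<^sup>2) \<partial>M) \<le> exp (7/12) * (1 + 2 * exp (1/2) / (exp 1 - 1))"
    using G by (simp add: G_def ennreal_le_iff)
qed

lemma exp_mul_centred_product_le:
  fixes l x y S :: real
  assumes l: "\<bar>l\<bar> \<le> 1/7" and S: "\<bar>S\<bar> \<le> 3/2"
  shows "exp (l * (x * y - S)) \<le> 1 + l * (x * y - S)
    + l\<^sup>2 / 2 * (64 / exp 2 * exp (33/56) * ((exp (11/28 * x\<^sup>2) + exp (11/28 * y\<^sup>2)) / 2))"
proof -
  define W where "W = x * y - S"
  define c :: real where "c = 11/28"
  have "\<bar>x * y\<bar> \<le> (x\<^sup>2 + y\<^sup>2) / 2"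
    using sum_squares_bound[of "\<bar>x\<bar>" "\<bar>y\<bar>"] by (simp add: abs_mult power2_eq_square)
  then have "\<bar>W\<bar> \<le> 3/2 + (x\<^sup>2 + y\<^sup>2) / 2"
    using S abs_triangle_ineq4[of "x * y" S] unfolding W_def by linarith
  then have "c * \<bar>W\<bar> \<le> c * (3/2 + (x\<^sup>2 + y\<^sup>2) / 2)"
    by (intro mult_left_mono) (simp_all add: c_def)
  moreover have "c * (3/2 + (x\<^sup>2 + y\<^sup>2) / 2) = c * (3/2) + (c * x\<^sup>2 + c * y\<^sup>2) / 2"
    by (simp add: algebra_simps)
  moreover have "c * (3/2) = 33/56"
    by (simp add: c_def)
  ultimately have "c * \<bar>W\<bar> \<le> 33/56 + (c * x\<^sup>2 + c * y\<^sup>2) / 2"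
    by linarith
  then have "exp (c * \<bar>W\<bar>) \<le> exp (33/56) * exp ((c * x\<^sup>2 + c * y\<^sup>2) / 2)"
    by (simp flip: exp_add)
  also have "\<dots> \<le> exp (33/56) * ((exp (c * x\<^sup>2) + exp (c * y\<^sup>2)) / 2)"
    by (intro mult_left_mono exp_midpoint_le) simp
  finally have "l\<^sup>2 / 2 * (64 / exp 2 * exp (c * \<bar>W\<bar>))
      \<le> l\<^sup>2 / 2 * (64 / exp 2 * exp (33/56) * ((exp (c * x\<^sup>2) + exp (c * y\<^sup>2)) / 2))"
    unfolding mult.assoc by (intro mult_left_mono) simp_all
  then show ?thesis
    using exp_mul_le_quadratic_bound[OF l, of W] unfolding W_def c_def by linarith
qed

lemma mgf_le_of_quadratic_bound:
  assumes "prob_space M" and W: "integrable M W" "(\<integral>w. W w \<partial>M) = 0"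
    and B: "integrable M B" "(\<integral>w. B w \<partial>M) \<le> b"
    and pw: "\<And>w. exp (l * W w) \<le> 1 + l * W w + l\<^sup>2 / 2 * B w"
  shows "mgf_le M W l (b / 2 * l\<^sup>2)"
proof -
  interpret prob_space M by fact
  have bound: "integrable M (\<lambda>w. 1 + l * W w + l\<^sup>2 / 2 * B w)"
    using W B by auto
  have int: "integrable M (\<lambda>w. exp (l * W w))"
  proof (rule Bochner_Integration.integrable_bound[OF bound])
    show "(\<lambda>w. exp (l * W w)) \<in> borel_measurable M"
      using borel_measurable_integrable[OF W(1)] by measurable
    show "AE w in M. norm (exp (l * W w)) \<le> norm (1 + l * W w + l\<^sup>2 / 2 * B w)"
      using pw by (intro AE_I2) (metis abs_of_pos exp_gt_zero order_trans abs_ge_self real_norm_def)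
  qed
  have "(\<integral>w. exp (l * W w) \<partial>M) \<le> (\<integral>w. 1 + l * W w + l\<^sup>2 / 2 * B w \<partial>M)"
    using int bound pw by (intro integral_mono) auto
  also have "\<dots> = 1 + l\<^sup>2 / 2 * (\<integral>w. B w \<partial>M)"
    using W B by (simp add: prob_space)
  also have "\<dots> \<le> 1 + b / 2 * l\<^sup>2"
    using mult_left_mono[OF B(2), of "l\<^sup>2"] by (simp add: ac_simps)
  also have "\<dots> \<le> exp (b / 2 * l\<^sup>2)"
    by (rule exp_ge_add_one_self[simplified add.commute])
  finally show ?thesis
    using int by (simp add: mgf_le_def)
qed

lemma subgaussian_integrable_mult:
  assumes "prob_space M" and x: "x \<in> borel_measurable M" and y: "y \<in> borel_measurable M"
    and subx: "subgaussian M x" and suby: "subgaussian M y"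
  shows "integrable M (\<lambda>w. x w * y w)" and "\<bar>\<integral>w. x w * y w \<partial>M\<bar> \<le> 3/2"
proof -
  interpret prob_space M by fact
  note x2 = subgaussian_second_moment[OF \<open>prob_space M\<close> x subx]
    and y2 = subgaussian_second_moment[OF \<open>prob_space M\<close> y suby]
  have amgm: "\<bar>x w * y w\<bar> \<le> ((x w)\<^sup>2 + (y w)\<^sup>2) / 2" for w
    using sum_squares_bound[of "\<bar>x w\<bar>" "\<bar>y w\<bar>"] by (simp add: abs_mult power2_eq_square)
  show int: "integrable M (\<lambda>w. x w * y w)"
    by (rule Bochner_Integration.integrable_bound[of _ "\<lambda>w. ((x w)\<^sup>2 + (y w)\<^sup>2) / 2"])
      (use x y x2 y2 amgm in \<open>auto intro!: AE_I2\<close>)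
  have "\<bar>\<integral>w. x w * y w \<partial>M\<bar> \<le> (\<integral>w. \<bar>x w * y w\<bar> \<partial>M)"
    by (rule integral_abs_bound)
  also have "\<dots> \<le> (\<integral>w. ((x w)\<^sup>2 + (y w)\<^sup>2) / 2 \<partial>M)"
    using int x2 y2 amgm by (intro integral_mono) auto
  also have "\<dots> \<le> 3/2"
    using x2 y2 by simp
  finally show "\<bar>\<integral>w. x w * y w \<partial>M\<bar> \<le> 3/2" .
qed

lemma subgaussian_product_mgf:
  assumes M: "prob_space M" and x: "x \<in> borel_measurable M" and y: "y \<in> borel_measurable M"
    and subx: "subgaussian M x" and suby: "subgaussian M y" and l: "\<bar>l\<bar> \<le> 1/7"
  shows "mgf_le M (\<lambda>w. x w * y w - (\<integral>w. x w * y w \<partial>M)) l (49 * l\<^sup>2)"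
proof -
  interpret prob_space M by fact
  define K where "K = exp (7/12) * (1 + 2 * exp (1/2) / (exp 1 - 1 :: real))"
  define B where "B w = 64 / exp 2 * exp (33/56) * ((exp (11/28 * (x w)\<^sup>2) + exp (11/28 * (y w)\<^sup>2)) / 2)" for w
  note xy = subgaussian_integrable_mult[OF M x y subx suby]
  note gx = subgaussian_exp_square[OF M x subx, folded K_def]
    and gy = subgaussian_exp_square[OF M y suby, folded K_def]
  have "mgf_le M (\<lambda>w. x w * y w - (\<integral>w. x w * y w \<partial>M)) l (98 / 2 * l\<^sup>2)"
  proof (rule mgf_le_of_quadratic_bound[OF M])
    show "integrable M (\<lambda>w. x w * y w - (\<integral>w. x w * y w \<partial>M))"
      and "(\<integral>w. x w * y w - (\<integral>w. x w * y w \<partial>M) \<partial>M) = 0"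
      using xy by (simp_all add: prob_space)
    show "integrable M B"
      unfolding B_def using gx gy by auto
    have "(\<integral>w. B w \<partial>M) = 64 / exp 2 * exp (33/56) *
        (((\<integral>w. exp (11/28 * (x w)\<^sup>2) \<partial>M) + (\<integral>w. exp (11/28 * (y w)\<^sup>2) \<partial>M)) / 2)"
      unfolding B_def using gx gy by simp
    also have "\<dots> \<le> 64 / exp 2 * exp (33/56) * K"
      using gx gy by (intro mult_left_mono) auto
    also have "\<dots> \<le> 98"
      unfolding K_def by (rule product_mgf_constant_le)
    finally show "(\<integral>w. B w \<partial>M) \<le> 98" .
    show "exp (l * (x w * y w - (\<integral>w. x w * y w \<partial>M)))
        \<le> 1 + l * (x w * y w - (\<integral>w. x w * y w \<partial>M)) + l\<^sup>2 / 2 * B w" for w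
      unfolding B_def by (rule exp_mul_centred_product_le[OF l xy(2)])
  qed
  then show ?thesis
    by simp
qed

section \<open>Empirical covariance\<close>

lemma centred_covariance_eq:
  fixes T :: "'i set" and x y :: "'i \<Rightarrow> real" and S a b :: real
  assumes "card T \<noteq> 0"
  shows "S - (\<Sum>v\<in>T. (x v - a) * (y v - b)) / card T
    = - ((\<Sum>v\<in>T. x v * y v - S) / card T) + b * ((\<Sum>v\<in>T. x v) / card T)
      + a * ((\<Sum>v\<in>T. y v) / card T) - a * b"
proof -
  have "(\<Sum>v\<in>T. (x v - a) * (y v - b)) = (\<Sum>v\<in>T. (x v * y v - S) + S - b * x v - a * y v + a * b)"
    by (intro sum.cong refl) (simp add: algebra_simps)
  also have "\<dots> = (\<Sum>v\<in>T. x v * y v - S) + card T * S - b * (\<Sum>v\<in>T. x v) - a * (\<Sum>v\<in>T. y v) + card T * (a * b)"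
    by (simp add: sum.distrib sum_subtractf sum_distrib_left)
  finally show ?thesis
    using assms by (simp add: field_simps)
qed

lemma abs_mean_products_le:
  fixes a b xb yb L N Ni Nj :: real
  assumes L: "L \<ge> 0" and N: "0 < N" "N \<le> Ni" "N \<le> Nj"
    and ha: "\<bar>a\<bar> \<le> sqrt (6 * L / Ni)" and hb: "\<bar>b\<bar> \<le> sqrt (6 * L / Nj)"
    and hxb: "\<bar>xb\<bar> \<le> sqrt (6 * L / N)" and hyb: "\<bar>yb\<bar> \<le> sqrt (6 * L / N)"
  shows "\<bar>b * xb\<bar> + \<bar>a * yb\<bar> + \<bar>a * b\<bar>
    \<le> sqrt (36 * L\<^sup>2 / (N * Nj)) + sqrt (48 * L\<^sup>2 / (N * Ni)) + 2 * max (3 * L / N) (sqrt (3 * L / N))"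
proof -
  have Ni: "Ni > 0" and Nj: "Nj > 0"
    using N by linarith+
  have "\<bar>b * xb\<bar> \<le> sqrt (36 * L\<^sup>2 / (N * Nj))"
  proof -
    have "\<bar>b * xb\<bar> \<le> sqrt (6 * L / Nj * (6 * L / N))"
      using hb hxb by (rule abs_mult_le_sqrt_mult)
    also have "6 * L / Nj * (6 * L / N) = 36 * L\<^sup>2 / (N * Nj)"
      by (simp add: power2_eq_square field_simps)
    finally show ?thesis .
  qed
  moreover have "\<bar>a * yb\<bar> \<le> sqrt (48 * L\<^sup>2 / (N * Ni))"
  proof -
    have "\<bar>a * yb\<bar> \<le> sqrt (6 * L / Ni * (6 * L / N))"
      using ha hyb by (rule abs_mult_le_sqrt_mult)
    also have "6 * L / Ni * (6 * L / N) = 36 * L\<^sup>2 / (N * Ni)"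
      by (simp add: power2_eq_square field_simps)
    also have "sqrt (36 * L\<^sup>2 / (N * Ni)) \<le> sqrt (48 * L\<^sup>2 / (N * Ni))"
      using N(1) Ni by (intro real_sqrt_le_mono divide_right_mono) auto
    finally show ?thesis .
  qed
  moreover have "\<bar>a * b\<bar> \<le> 2 * max (3 * L / N) (sqrt (3 * L / N))"
  proof -
    have "\<bar>a * b\<bar> \<le> sqrt (6 * L / Ni * (6 * L / Nj))"
      using ha hb by (rule abs_mult_le_sqrt_mult)
    also have "\<dots> \<le> sqrt (6 * L / N * (6 * L / N))"
      using L N Ni Nj by (intro real_sqrt_le_mono mult_mono divide_left_mono) auto
    also have "\<dots> = \<bar>6 * L / N\<bar>"
      by (rule real_sqrt_abs2)
    also have "\<dots> = 6 * L / N"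
      using L N(1) by simp
    finally show ?thesis
      by simp
  qed
  ultimately show ?thesis
    by linarith
qed

lemma empirical_covariance_deviation:
  fixes Si Sj Sij :: "'i set" and x y :: "'i \<Rightarrow> real" and S L :: real
  assumes fin: "finite Si" "finite Sj" and sub: "Sij \<subseteq> Si" "Sij \<subseteq> Sj" and ne: "Sij \<noteq> {}"
    and L: "L \<ge> 0"
  defines "Ni \<equiv> real (card Si)" and "Nj \<equiv> real (card Sj)" and "N \<equiv> real (card Sij)"
  assumes hx: "\<bar>\<Sum>v\<in>Si. x v\<bar> \<le> Ni * sqrt (6 * L / Ni)"
    and hy: "\<bar>\<Sum>v\<in>Sj. y v\<bar> \<le> Nj * sqrt (6 * L / Nj)"
    and hxij: "\<bar>\<Sum>v\<in>Sij. x v\<bar> \<le> N * sqrt (6 * L / N)"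
    and hyij: "\<bar>\<Sum>v\<in>Sij. y v\<bar> \<le> N * sqrt (6 * L / N)"
    and hxy: "\<bar>\<Sum>v\<in>Sij. x v * y v - S\<bar> \<le> N * (14 * max (3 * L / N) (sqrt (3 * L / N)))"
  shows "\<bar>S - (\<Sum>v\<in>Sij. (x v - (\<Sum>v\<in>Si. x v) / Ni) * (y v - (\<Sum>v\<in>Sj. y v) / Nj)) / N\<bar>
     \<le> 16 * max (3 * L / N) (sqrt (3 * L / N)) + sqrt (48 * L\<^sup>2 / (N * Ni)) + sqrt (36 * L\<^sup>2 / (N * Nj))"
proof -
  have fin_ij: "finite Sij"
    using fin(1) sub(1) by (rule finite_subset[rotated])
  have N: "N > 0" "N \<le> Ni" "N \<le> Nj"
    using ne fin_ij card_mono[OF fin(1) sub(1)] card_mono[OF fin(2) sub(2)]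
    by (simp_all add: N_def Ni_def Nj_def card_gt_0_iff)
  then have Ni: "Ni > 0" and Nj: "Nj > 0"
    by linarith+
  have avg: "\<bar>s / K\<bar> \<le> b" if "\<bar>s\<bar> \<le> K * b" "K > 0" for s K b :: real
    using that by (simp add: abs_divide pos_divide_le_eq mult.commute)
  define a where "a = (\<Sum>v\<in>Si. x v) / Ni"
  define b where "b = (\<Sum>v\<in>Sj. y v) / Nj"
  define xb where "xb = (\<Sum>v\<in>Sij. x v) / N"
  define yb where "yb = (\<Sum>v\<in>Sij. y v) / N"
  define wb where "wb = (\<Sum>v\<in>Sij. x v * y v - S) / N"
  define D where "D = max (3 * L / N) (sqrt (3 * L / N))"
  have ha: "\<bar>a\<bar> \<le> sqrt (6 * L / Ni)" and hb: "\<bar>b\<bar> \<le> sqrt (6 * L / Nj)"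
    and hxb: "\<bar>xb\<bar> \<le> sqrt (6 * L / N)" and hyb: "\<bar>yb\<bar> \<le> sqrt (6 * L / N)"
    and hwb: "\<bar>wb\<bar> \<le> 14 * D"
    unfolding a_def b_def xb_def yb_def wb_def D_def
    using avg[OF hx Ni] avg[OF hy Nj] avg[OF hxij N(1)] avg[OF hyij N(1)] avg[OF hxy N(1)] by auto
  have "S - (\<Sum>v\<in>Sij. (x v - a) * (y v - b)) / N = - wb + b * xb + a * yb - a * b"
    unfolding wb_def xb_def yb_def N_def using N(1) by (intro centred_covariance_eq) (simp add: N_def)
  then have "\<bar>S - (\<Sum>v\<in>Sij. (x v - a) * (y v - b)) / N\<bar> \<le> \<bar>wb\<bar> + \<bar>b * xb\<bar> + \<bar>a * yb\<bar> + \<bar>a * b\<bar>"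
    by linarith
  moreover have "\<bar>b * xb\<bar> + \<bar>a * yb\<bar> + \<bar>a * b\<bar>
      \<le> sqrt (36 * L\<^sup>2 / (N * Nj)) + sqrt (48 * L\<^sup>2 / (N * Ni)) + 2 * D"
    unfolding D_def using L N ha hb hxb hyb by (rule abs_mean_products_le)
  ultimately show ?thesis
    using hwb unfolding a_def b_def D_def by linarith
qed

lemma Int_stable_vimage: "Int_stable {f -` B \<inter> S | B. B \<in> sets N}"
proof (safe intro!: Int_stableI)
  fix B C assume "B \<in> sets N" "C \<in> sets N"
  then show "\<exists>D. f -` B \<inter> S \<inter> (f -` C \<inter> S) = f -` D \<inter> S \<and> D \<in> sets N"
    by (intro exI[of _ "B \<inter> C"]) auto
qed

lemma (in prob_space) indep_var_nn_integral:
  fixes X Y :: "'a \<Rightarrow> ennreal"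
  assumes "indep_var borel X borel Y"
  shows "(\<integral>\<^sup>+w. X w * Y w \<partial>M) = (\<integral>\<^sup>+w. X w \<partial>M) * (\<integral>\<^sup>+w. Y w \<partial>M)"
proof -
  have "case_bool borel borel = (\<lambda>_. borel :: ennreal measure)"
    by (auto simp: fun_eq_iff split: bool.split)
  with assms have "indep_vars (\<lambda>_. borel) (case_bool X Y) UNIV"
    unfolding indep_var_def by simp
  then have "(\<integral>\<^sup>+w. (\<Prod>b\<in>UNIV. case_bool X Y b w) \<partial>M) = (\<Prod>b\<in>UNIV. \<integral>\<^sup>+w. case_bool X Y b w \<partial>M)"
    by (intro indep_vars_nn_integral) auto
  then show ?thesis
    by (simp add: UNIV_bool mult.commute)
qed

lemma (in prob_space) indep_set_mono:
  assumes "indep_set A B" "A' \<subseteq> A" "B' \<subseteq> B"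
  shows "indep_set A' B'"
  using assms(1) unfolding indep_set_def
  by (rule indep_sets_mono_sets) (use assms(2,3) in \<open>simp split: bool.split\<close>)

lemma measure_Union_le_card_mult:
  fixes p :: real
  assumes "finite \<E>" "\<E> \<subseteq> sets M" "\<And>E. E \<in> \<E> \<Longrightarrow> measure M E \<le> p"
  shows "measure M (\<Union>\<E>) \<le> card \<E> * p"
proof -
  have "measure M (\<Union>\<E>) \<le> (\<Sum>E\<in>\<E>. measure M E)"
    using assms(1,2) by (intro measure_Union_le) auto
  also have "\<dots> \<le> card \<E> * p"
    using assms(3) by (rule sum_bounded_above)
  finally show ?thesis .
qed

lemma Diff_None_eq_image_Some: "J - {None} = Some ` {v. Some v \<in> J}"
proof
  show "J - {None} \<subseteq> Some ` {v. Some v \<in> J}"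
  proof
    fix s assume s: "s \<in> J - {None}"
    then obtain v where "s = Some v"
      by (cases s) auto
    with s show "s \<in> Some ` {v. Some v \<in> J}"
      by auto
  qed
qed auto

lemma (in prob_space) indep_sets_case_option:
  assumes F: "indep_sets F UNIV" and G: "G \<subseteq> events"
    and G_indep: "\<And>K B g. finite K \<Longrightarrow> K \<noteq> {} \<Longrightarrow> (\<And>v. v \<in> K \<Longrightarrow> B v \<in> F v) \<Longrightarrow> g \<in> G \<Longrightarrow>
        prob (g \<inter> (\<Inter>v\<in>K. B v)) = prob g * prob (\<Inter>v\<in>K. B v)"
  shows "indep_sets (case_option G F) UNIV"
proof (rule indep_setsI)
  show "case_option G F s \<subseteq> events" for s
    using G F by (auto simp: indep_sets_def split: option.split)
next
  fix B J
  assume J: "J \<noteq> {}" "J \<subseteq> UNIV" "finite J" and B: "\<forall>s\<in>J. B s \<in> case_option G F s"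
  define K where "K = {v. Some v \<in> J}"
  have K: "finite K"
    using finite_vimageI[OF J(3), of Some] by (simp add: K_def vimage_def)
  have BK: "B (Some v) \<in> F v" if "v \<in> K" for v
    using B that by (auto simp: K_def)
  have prod_K: "prob (\<Inter>v\<in>K. B (Some v)) = (\<Prod>v\<in>K. prob (B (Some v)))" if "K \<noteq> {}"
    by (rule indep_setsD[OF F]) (use K BK that in auto)
  have J_Some: "J - {None} = Some ` K"
    unfolding K_def by (rule Diff_None_eq_image_Some)
  show "prob (\<Inter>s\<in>J. B s) = (\<Prod>s\<in>J. prob (B s))"
  proof (cases "None \<in> J")
    case False
    then have "J = Some ` K" and "K \<noteq> {}"
      using J_Some J(1) by auto
    then show ?thesis
      using prod_K by (simp add: prod.reindex)
  next
    case True
    then have J_eq: "J = insert None (Some ` K)"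
      using J_Some by blast
    have g: "B None \<in> G"
      using B True by auto
    show ?thesis
    proof (cases "K = {}")
      case False
      have "prob (\<Inter>s\<in>J. B s) = prob (B None \<inter> (\<Inter>v\<in>K. B (Some v)))"
        unfolding J_eq by auto
      also have "\<dots> = prob (B None) * (\<Prod>v\<in>K. prob (B (Some v)))"
        using G_indep[OF K False BK g] prod_K[OF False] by simp
      finally show ?thesis
        using K unfolding J_eq by (simp add: prod.reindex)
    qed (simp add: J_eq)
  qed
qed

locale semi_bandit =
  fixes M :: "'a measure" and MR :: "'r measure" and R :: "'a \<Rightarrow> 'r"
    and n :: nat and \<A> :: "nat set set"
    and X :: "nat \<Rightarrow> 'a \<Rightarrow> nat \<Rightarrow> real"
    and A :: "nat \<Rightarrow> 'a \<Rightarrow> nat set"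
  assumes M: "prob_space M"
    and actions: "\<forall>S\<in>\<A>. S \<noteq> {} \<and> S \<subseteq> {..<n}"
    and X_meas: "\<And>u k. (\<lambda>w. X u w k) \<in> borel_measurable M"
    and X_indep: "prob_space.indep_vars M (\<lambda>_. PiM {..<n} (\<lambda>_. borel))
                    (\<lambda>u w. restrict (X u w) {..<n}) UNIV"
    and X_ident: "\<And>u. distr M (PiM {..<n} (\<lambda>_. borel)) (\<lambda>w. restrict (X u w) {..<n})
                       = distr M (PiM {..<n} (\<lambda>_. borel)) (\<lambda>w. restrict (X 0 w) {..<n})"
    and R_meas: "R \<in> measurable M MR"
    and R_indep: "prob_space.indep_set M
                    {R -` B \<inter> space M | B. B \<in> sets MR}
                    {(\<lambda>w u. restrict (X u w) {..<n}) -` C \<inter> space M | C.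
                       C \<in> sets (PiM UNIV (\<lambda>_. PiM {..<n} (\<lambda>_. borel)))}"
    and A_in: "\<And>u w. w \<in> space M \<Longrightarrow> A u w \<in> \<A>"
    and A_adapted: "\<And>u S. {w \<in> space M. A u w = S} \<in> hist_events M MR R A X u"
begin

sublocale prob_space M
  by (rule M)

declare X_meas[measurable]

abbreviation PS :: "(nat \<Rightarrow> real) measure" where
  "PS \<equiv> PiM {..<n} (\<lambda>_. borel)"

definition Y :: "nat \<Rightarrow> 'a \<Rightarrow> nat \<Rightarrow> real" where
  "Y u w = restrict (X u w) {..<n}"

lemma Y_eq_X: "k < n \<Longrightarrow> Y u w k = X u w k"
  by (simp add: Y_def)

lemma measurable_Y[measurable]: "Y u \<in> measurable M PS"
  unfolding Y_def by (intro measurable_restrict X_meas)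

text \<open>Index \<open>None\<close> stands for the internal randomness \<open>R\<close>, \<open>Some u\<close> for the outcome vector of
  round \<open>u\<close>.\<close>

definition source_events :: "nat option \<Rightarrow> 'a set set" where
  "source_events = case_option {R -` B \<inter> space M | B. B \<in> sets MR} (\<lambda>u. {Y u -` C \<inter> space M | C. C \<in> sets PS})"

text \<open>\<open>past u\<close> contains the complete outcome vectors of the rounds before \<open>u\<close>, not only their
  observed coordinates, so it is larger than the observed history \<open>hist_events\<close>.\<close>

definition past :: "nat \<Rightarrow> 'a measure" where
  "past u = sigma (space M) (\<Union>s\<in>insert None (Some ` {..<u}). source_events s)"

lemma source_events_subset: "source_events s \<subseteq> events"
  using R_meas by (auto simp: source_events_def measurable_sets split: option.split)

lemma sets_past: "sets (past u) = sigma_sets (space M) (\<Union>s\<in>insert None (Some ` {..<u}). source_events s)"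
  unfolding past_def using source_events_subset sets.sets_into_space
  by (intro sets_measure_of) blast

lemma space_past[simp]: "space (past u) = space M"
  unfolding past_def using source_events_subset sets.sets_into_space
  by (intro space_measure_of_conv[THEN trans]) auto

lemma subalgebra_past: "subalgebra M (past u)"
proof -
  have "(\<Union>s\<in>insert None (Some ` {..<u}). source_events s) \<subseteq> events"
    using source_events_subset by blast
  then show ?thesis
    by (simp add: subalgebra_def sets_past sets.sigma_sets_subset)
qed

lemma sets_past_mono: "u \<le> u' \<Longrightarrow> sets (past u) \<subseteq> sets (past u')"
  unfolding sets_past by (intro sigma_sets_subseteq) auto

lemma source_events_in_past: "s \<in> insert None (Some ` {..<u}) \<Longrightarrow> source_events s \<subseteq> sets (past u)"
  unfolding sets_past by auto

lemma measurable_Y_past: "v < u \<Longrightarrow> Y v \<in> measurable (past u) PS"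
  using source_events_in_past[of "Some v" u] measurable_space[OF measurable_Y]
  by (intro measurableI) (auto simp: source_events_def)

lemma finite_actions: "finite \<A>"
proof (rule finite_subset)
  show "\<A> \<subseteq> Pow {..<n}"
    using actions by blast
qed simp

lemma measurable_action_iff_level_sets:
  assumes "space N = space M"
  shows "A v \<in> measurable N (count_space UNIV) \<longleftrightarrow> (\<forall>S. {w \<in> space M. A v w = S} \<in> sets N)"
proof
  assume "A v \<in> measurable N (count_space UNIV)"
  then have "A v -` {S} \<inter> space N \<in> sets N" for S
    by (rule measurable_sets) simp
  moreover have "A v -` {S} \<inter> space N = {w \<in> space M. A v w = S}" for S
    using assms by auto
  ultimately show "\<forall>S. {w \<in> space M. A v w = S} \<in> sets N"
    by simp
next
  assume level: "\<forall>S. {w \<in> space M. A v w = S} \<in> sets N"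
  show "A v \<in> measurable N (count_space UNIV)"
  proof (rule measurableI)
    fix Z :: "nat set set"
    have "A v -` Z \<inter> space N = (\<Union>S\<in>Z \<inter> \<A>. {w \<in> space M. A v w = S})"
      using A_in assms by auto
    also have "\<dots> \<in> sets N"
      using level finite_actions by (intro sets.finite_UN) auto
    finally show "A v -` Z \<inter> space N \<in> sets N" .
  qed auto
qed

lemma measurable_obs_past:
  assumes A_meas: "A v \<in> measurable (past u) (count_space UNIV)" and v: "v < u"
  shows "(\<lambda>w. obs A X v i w) \<in> borel_measurable (past u)"
proof (cases "i < n")
  case True
  have "(\<lambda>w. Y v w i) \<in> borel_measurable (past u)"
    using True by (intro measurable_compose[OF measurable_Y_past[OF v] measurable_component_singleton]) simp
  moreover have "{w \<in> space (past u). i \<in> A v w} \<in> sets (past u)"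
    using measurable_sets[OF A_meas, of "{S. i \<in> S}"] by (simp add: vimage_def Int_def conj_commute)
  ultimately have "(\<lambda>w. if i \<in> A v w then Y v w i else 0) \<in> borel_measurable (past u)"
    by (intro measurable_If) auto
  moreover have "obs A X v i w = (if i \<in> A v w then Y v w i else 0)" for w
    using True by (simp add: obs_def Y_eq_X)
  ultimately show ?thesis
    by simp
next
  case False
  then have "obs A X v i w = 0" if "w \<in> space (past u)" for w
    using A_in[of w v] that actions by (auto simp: obs_def)
  then show ?thesis
    by (subst measurable_cong[where g="\<lambda>_. 0"]) auto
qed

text \<open>Induction on the round: the actions before \<open>u\<close> are measurable with respect to \<open>past u\<close>,
  hence so are the observed outcomes, which generate \<open>hist_events\<close>.\<close>

lemma hist_events_subset_past: "hist_events M MR R A X u \<subseteq> sets (past u)"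
proof (induction u rule: less_induct)
  case (less u)
  have A_meas: "A v \<in> measurable (past u) (count_space UNIV)" if "v < u" for v
    unfolding measurable_action_iff_level_sets[OF space_past]
    using less[OF that] A_adapted sets_past_mono[of v u] that by auto
  show ?case
    unfolding hist_events_def
  proof (rule sets.sigma_sets_subset[of _ "past u", unfolded space_past], intro subsetI, elim UnE CollectE exE conjE)
    fix E B assume "E = R -` B \<inter> space M" "B \<in> sets MR"
    then show "E \<in> sets (past u)"
      using source_events_in_past[of None u] by (auto simp: source_events_def)
  next
    fix E v S assume "E = A v -` {S} \<inter> space M" "v < u"
    then show "E \<in> sets (past u)"
      using measurable_sets[OF A_meas, of v "{S}"] by simp
  next
    fix E v i B assume "E = (\<lambda>w. obs A X v i w) -` B \<inter> space M" "v < u" "B \<in> sets borel"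
    then show "E \<in> sets (past u)"
      using measurable_sets[OF measurable_obs_past[OF A_meas[OF \<open>v < u\<close>] \<open>v < u\<close>]] by auto
  qed
qed

lemma measurable_A_past: "v \<le> u \<Longrightarrow> A v \<in> measurable (past u) (count_space UNIV)"
  unfolding measurable_action_iff_level_sets[OF space_past]
  using hist_events_subset_past A_adapted sets_past_mono by blast

lemma measurable_A[measurable]: "A v \<in> measurable M (count_space UNIV)"
  using measurable_from_subalg[OF subalgebra_past measurable_A_past] by blast

lemma indep_Y_events: "indep_sets (\<lambda>u. {Y u -` C \<inter> space M | C. C \<in> sets PS}) UNIV"
proof -
  have "indep_vars (\<lambda>_. PS) Y UNIV"
    using X_indep by (simp add: Y_def[abs_def])
  then show ?thesis
    unfolding indep_vars_def by (elim conjE indep_sets_mono_sets) auto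
qed

lemma Inter_Y_events:
  assumes K: "finite K" "K \<noteq> {}" and C: "\<And>u. u \<in> K \<Longrightarrow> C u \<in> sets PS"
  shows "(\<Inter>u\<in>K. Y u -` C u \<inter> space M)
    \<in> {(\<lambda>w u. Y u w) -` D \<inter> space M | D. D \<in> sets (PiM UNIV (\<lambda>_. PS))}"
proof -
  define D where "D = (\<Inter>u\<in>K. (\<lambda>f. f u) -` C u \<inter> space (PiM UNIV (\<lambda>_. PS)))"
  have "D \<in> sets (PiM UNIV (\<lambda>_. PS))"
    unfolding D_def using K C
    by (intro sets.finite_INT measurable_sets[OF measurable_component_singleton]) auto
  moreover have "(\<lambda>u. Y u w) \<in> space (PiM UNIV (\<lambda>_. PS))" if "w \<in> space M" for w
    by (subst space_PiM) (rule PiE_I, rule measurable_space[OF measurable_Y that], simp)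
  then have "(\<Inter>u\<in>K. Y u -` C u \<inter> space M) = (\<lambda>w u. Y u w) -` D \<inter> space M"
    using K(2) by (auto simp: D_def)
  ultimately show ?thesis
    by blast
qed

lemma indep_source_events: "indep_sets source_events UNIV"
  unfolding source_events_def
proof (rule indep_sets_case_option[OF indep_Y_events])
  show "{R -` B \<inter> space M | B. B \<in> sets MR} \<subseteq> events"
    using R_meas by (auto simp: measurable_sets)
next
  fix K B g
  assume K: "finite K" "K \<noteq> {}" and B: "\<And>v. v \<in> K \<Longrightarrow> B v \<in> {Y v -` C \<inter> space M | C. C \<in> sets PS}"
    and g: "g \<in> {R -` B \<inter> space M | B. B \<in> sets MR}"
  have "\<forall>v\<in>K. \<exists>C. C \<in> sets PS \<and> B v = Y v -` C \<inter> space M"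
    using B by blast
  then obtain C where C: "\<And>v. v \<in> K \<Longrightarrow> C v \<in> sets PS \<and> B v = Y v -` C v \<inter> space M"
    by metis
  then have "(\<Inter>v\<in>K. B v) \<in> {(\<lambda>w u. Y u w) -` D \<inter> space M | D. D \<in> sets (PiM UNIV (\<lambda>_. PS))}"
    using Inter_Y_events[OF K, of C] by simp
  moreover have "indep_set {R -` B \<inter> space M | B. B \<in> sets MR}
      {(\<lambda>w u. Y u w) -` D \<inter> space M | D. D \<in> sets (PiM UNIV (\<lambda>_. PS))}"
    using R_indep by (simp add: Y_def)
  ultimately show "prob (g \<inter> (\<Inter>v\<in>K. B v)) = prob g * prob (\<Inter>v\<in>K. B v)"
    using g by (intro indep_setD) auto
qed

lemma indep_past_Y: "indep_set (sets (past u)) (sigma_sets (space M) (source_events (Some u)))"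
proof -
  define I where "I b = (if b then insert None (Some ` {..<u}) else {Some u})" for b
  have "indep_sets (\<lambda>b. sigma_sets (space M) (\<Union>s\<in>I b. source_events s)) UNIV"
  proof (rule indep_sets_collect_sigma)
    show "indep_sets source_events (\<Union>b\<in>UNIV. I b)"
      by (rule indep_sets_mono_index[OF _ indep_source_events]) simp
    show "Int_stable (source_events s)" for s
      unfolding source_events_def by (cases s) (auto intro: Int_stable_vimage)
    show "disjoint_family_on I UNIV"
      unfolding disjoint_family_on_def I_def by auto
  qed
  moreover have "(\<lambda>b. sigma_sets (space M) (\<Union>s\<in>I b. source_events s))
      = case_bool (sets (past u)) (sigma_sets (space M) (source_events (Some u)))"
    by (intro ext) (simp add: I_def sets_past split: bool.split)
  ultimately show ?thesis
    unfolding indep_set_def by simp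
qed

lemma nn_integral_past_mult_Y:
  assumes G: "G \<in> borel_measurable (past u)" and h: "h \<in> borel_measurable PS"
  shows "(\<integral>\<^sup>+w. G w * h (Y u w) \<partial>M) = (\<integral>\<^sup>+w. G w \<partial>M) * (\<integral>\<^sup>+w. h (Y u w) \<partial>M)"
proof (rule indep_var_nn_integral)
  have G_M: "G \<in> borel_measurable M"
    using measurable_from_subalg[OF subalgebra_past G] .
  have "sigma_sets (space M) {G -` B \<inter> space M | B. B \<in> sets borel} \<subseteq> sets (past u)"
    using measurable_sets[OF G] by (intro sets.sigma_sets_subset[of _ "past u", unfolded space_past]) auto
  moreover have "sigma_sets (space M) {(\<lambda>w. h (Y u w)) -` B \<inter> space M | B. B \<in> sets borel}
      \<subseteq> sigma_sets (space M) (source_events (Some u))"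
  proof (intro sigma_sets_subseteq subsetI, elim CollectE exE conjE)
    fix E B assume E: "E = (\<lambda>w. h (Y u w)) -` B \<inter> space M" and B: "B \<in> sets borel"
    have "E = Y u -` (h -` B \<inter> space PS) \<inter> space M"
      unfolding E using measurable_space[OF measurable_Y] by auto
    moreover have "h -` B \<inter> space PS \<in> sets PS"
      using measurable_sets[OF h B] .
    ultimately show "E \<in> source_events (Some u)"
      unfolding source_events_def option.case by blast
  qed
  ultimately have "indep_set (sigma_sets (space M) {G -` B \<inter> space M | B. B \<in> sets borel})
      (sigma_sets (space M) {(\<lambda>w. h (Y u w)) -` B \<inter> space M | B. B \<in> sets borel})"
    by (rule indep_set_mono[OF indep_past_Y])
  moreover have "(\<lambda>w. h (Y u w)) \<in> borel_measurable M"
    using h by measurable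
  ultimately show "indep_var borel G borel (\<lambda>w. h (Y u w))"
    unfolding indep_var_eq using G_M by blast
qed

lemma nn_integral_Y_eq:
  assumes h: "h \<in> borel_measurable PS"
  shows "(\<integral>\<^sup>+w. h (Y u w) \<partial>M) = (\<integral>\<^sup>+w. h (Y 0 w) \<partial>M)"
proof -
  have "(\<integral>\<^sup>+w. h (Y u w) \<partial>M) = (\<integral>\<^sup>+f. h f \<partial>distr M PS (Y u))"
    using h by (simp add: nn_integral_distr)
  also have "distr M PS (Y u) = distr M PS (Y 0)"
    unfolding Y_def[abs_def] by (rule X_ident)
  also have "(\<integral>\<^sup>+f. h f \<partial>distr M PS (Y 0)) = (\<integral>\<^sup>+w. h (Y 0 w) \<partial>M)"
    using h by (simp add: nn_integral_distr)
  finally show ?thesis .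
qed

lemma nn_integral_past_mult_Y_le:
  assumes G: "G \<in> borel_measurable (past u)" and h: "h \<in> borel_measurable PS"
    and h1: "(\<integral>\<^sup>+w. h (Y 0 w) \<partial>M) \<le> 1"
  shows "(\<integral>\<^sup>+w. G w * h (Y u w) \<partial>M) \<le> (\<integral>\<^sup>+w. G w \<partial>M)"
  using mult_left_mono[OF h1, of "\<integral>\<^sup>+w. G w \<partial>M"]
  by (simp add: nn_integral_past_mult_Y[OF G h] nn_integral_Y_eq[OF h, of u])

lemma nn_integral_past_mult_if_Y_le:
  assumes G: "G \<in> borel_measurable (past u)" and sel: "sel \<in> measurable (past u) (count_space UNIV)"
    and h: "h \<in> borel_measurable PS" and h1: "(\<integral>\<^sup>+w. h (Y 0 w) \<partial>M) \<le> 1"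
  shows "(\<integral>\<^sup>+w. G w * (if sel w then h (Y u w) else 1) \<partial>M) \<le> (\<integral>\<^sup>+w. G w \<partial>M)"
proof -
  define G0 where "G0 w = (if sel w then 0 else G w)" for w
  define G1 where "G1 w = (if sel w then G w else 0)" for w
  have G01: "G0 \<in> borel_measurable (past u)" "G1 \<in> borel_measurable (past u)"
    unfolding G0_def G1_def using G sel by measurable
  then have G01_M: "G0 \<in> borel_measurable M" "G1 \<in> borel_measurable M"
    by (auto intro: measurable_from_subalg[OF subalgebra_past])
  have "(\<integral>\<^sup>+w. G w * (if sel w then h (Y u w) else 1) \<partial>M) = (\<integral>\<^sup>+w. G0 w + G1 w * h (Y u w) \<partial>M)"
    by (intro nn_integral_cong) (simp add: G0_def G1_def)
  also have "\<dots> = (\<integral>\<^sup>+w. G0 w \<partial>M) + (\<integral>\<^sup>+w. G1 w * h (Y u w) \<partial>M)"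
    using G01_M h by (intro nn_integral_add) auto
  also have "\<dots> \<le> (\<integral>\<^sup>+w. G0 w \<partial>M) + (\<integral>\<^sup>+w. G1 w \<partial>M)"
    using nn_integral_past_mult_Y_le[OF G01(2) h h1] by (rule add_left_mono)
  also have "\<dots> = (\<integral>\<^sup>+w. G0 w + G1 w \<partial>M)"
    using G01_M by (intro nn_integral_add[symmetric]) auto
  also have "\<dots> = (\<integral>\<^sup>+w. G w \<partial>M)"
    by (intro nn_integral_cong) (simp add: G0_def G1_def)
  finally show ?thesis .
qed

section \<open>Sums over adaptively selected rounds\<close>

definition selected_rounds :: "(nat set \<Rightarrow> bool) \<Rightarrow> nat \<Rightarrow> 'a \<Rightarrow> nat set" where
  "selected_rounds P t w = {v \<in> {1..<t}. P (A v w)}"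

definition selected_sum :: "(nat set \<Rightarrow> bool) \<Rightarrow> ((nat \<Rightarrow> real) \<Rightarrow> real) \<Rightarrow> nat \<Rightarrow> 'a \<Rightarrow> real" where
  "selected_sum P \<phi> t w = (\<Sum>v\<in>selected_rounds P t w. \<phi> (Y v w))"

lemma finite_selected_rounds[simp]: "finite (selected_rounds P t w)"
  by (simp add: selected_rounds_def)

lemma card_selected_rounds_le: "card (selected_rounds P t w) \<le> t - 1"
proof -
  have "card (selected_rounds P t w) \<le> card {1..<t}"
    by (rule card_mono) (auto simp: selected_rounds_def)
  then show ?thesis
    by simp
qed

lemma selected_rounds_Suc:
  "selected_rounds P (Suc t) w = (if 1 \<le> t \<and> P (A t w) then insert t (selected_rounds P t w) else selected_rounds P t w)"
  by (auto simp: selected_rounds_def less_Suc_eq)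

lemma selected_sum_scale: "selected_sum P (\<lambda>f. c * \<phi> f) t w = c * selected_sum P \<phi> t w"
  by (simp add: selected_sum_def sum_distrib_left)

lemma measurable_selection_past:
  "v \<le> u \<Longrightarrow> (\<lambda>w. P (A v w)) \<in> measurable (past u) (count_space UNIV)"
  by (intro measurable_compose[OF measurable_A_past measurable_count_space])

lemma measurable_card_selected_rounds_past:
  assumes t: "t \<le> u"
  shows "(\<lambda>w. real (card (selected_rounds P t w))) \<in> borel_measurable (past u)"
proof -
  have "(\<lambda>w. \<Sum>v\<in>{1..<t}. if P (A v w) then 1 else 0 :: real) \<in> borel_measurable (past u)"
  proof (rule borel_measurable_sum)
    fix v assume "v \<in> {1..<t}"
    then have [measurable]: "(\<lambda>w. P (A v w)) \<in> measurable (past u) (count_space UNIV)"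
      using t by (intro measurable_selection_past) simp
    show "(\<lambda>w. if P (A v w) then 1 else 0 :: real) \<in> borel_measurable (past u)"
      by measurable
  qed
  moreover have "real (card (selected_rounds P t w)) = (\<Sum>v\<in>{1..<t}. if P (A v w) then 1 else 0)" for w
    unfolding selected_rounds_def by (simp add: sum.inter_filter[symmetric])
  ultimately show ?thesis
    by simp
qed

lemma measurable_selected_sum_past:
  assumes \<phi>: "\<phi> \<in> borel_measurable PS" and t: "t \<le> u"
  shows "selected_sum P \<phi> t \<in> borel_measurable (past u)"
proof -
  have "(\<lambda>w. \<Sum>v\<in>{1..<t}. if P (A v w) then \<phi> (Y v w) else 0) \<in> borel_measurable (past u)"
  proof (rule borel_measurable_sum)
    fix v assume v: "v \<in> {1..<t}"
    then have [measurable]: "(\<lambda>w. P (A v w)) \<in> measurable (past u) (count_space UNIV)"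
      using t by (intro measurable_selection_past) simp
    have [measurable]: "(\<lambda>w. \<phi> (Y v w)) \<in> borel_measurable (past u)"
      using v t by (intro measurable_compose[OF measurable_Y_past \<phi>]) simp
    show "(\<lambda>w. if P (A v w) then \<phi> (Y v w) else 0) \<in> borel_measurable (past u)"
      by measurable
  qed
  moreover have "selected_sum P \<phi> t = (\<lambda>w. \<Sum>v\<in>{1..<t}. if P (A v w) then \<phi> (Y v w) else 0)"
    unfolding selected_sum_def[abs_def] selected_rounds_def by (intro ext sum.inter_filter) simp
  ultimately show ?thesis
    by simp
qed

lemma measurable_card_selected_rounds[measurable]:
  "(\<lambda>w. real (card (selected_rounds P t w))) \<in> borel_measurable M"
  using measurable_card_selected_rounds_past[OF order_refl] by (rule measurable_from_subalg[OF subalgebra_past])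

lemma measurable_selected_sum:
  "\<phi> \<in> borel_measurable PS \<Longrightarrow> selected_sum P \<phi> t \<in> borel_measurable M"
  using measurable_selected_sum_past[OF _ order_refl] by (rule measurable_from_subalg[OF subalgebra_past])

lemma exp_selected_sum_Suc:
  fixes l \<psi> :: real
  shows "exp (l * selected_sum P \<phi> (Suc t) w - \<psi> * card (selected_rounds P (Suc t) w))
    = exp (l * selected_sum P \<phi> t w - \<psi> * card (selected_rounds P t w))
      * (if 1 \<le> t \<and> P (A t w) then exp (l * \<phi> (Y t w) - \<psi>) else 1)"
proof (cases "1 \<le> t \<and> P (A t w)")
  case True
  then have "t \<notin> selected_rounds P t w" and "selected_rounds P (Suc t) w = insert t (selected_rounds P t w)"
    by (auto simp: selected_rounds_Suc selected_rounds_def)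
  then show ?thesis
    unfolding if_P[OF True] by (simp add: selected_sum_def algebra_simps flip: exp_add)
next
  case False
  then have "selected_rounds P (Suc t) w = selected_rounds P t w"
    by (auto simp: selected_rounds_Suc)
  then show ?thesis
    unfolding if_not_P[OF False] by (simp add: selected_sum_def)
qed

text \<open>\<open>exp (l * selected_sum P \<phi> t - \<psi> * card (selected_rounds P t))\<close> is a nonnegative
  supermartingale: whether round \<open>t\<close> is selected is decided by \<open>past t\<close>, and the fresh outcome
  \<open>Y t\<close> is independent of \<open>past t\<close>.\<close>

lemma nn_integral_exp_selected_sum_le_1:
  assumes \<phi>: "\<phi> \<in> borel_measurable PS" and mgf: "mgf_le M (\<lambda>w. \<phi> (Y 0 w)) l \<psi>"
  shows "(\<integral>\<^sup>+w. ennreal (exp (l * selected_sum P \<phi> t w - \<psi> * card (selected_rounds P t w))) \<partial>M) \<le> 1"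
proof (induction t)
  case 0
  show ?case
    by (simp add: selected_sum_def selected_rounds_def emeasure_space_1)
next
  case (Suc t)
  define Z where "Z w = ennreal (exp (l * selected_sum P \<phi> t w - \<psi> * card (selected_rounds P t w)))" for w
  define h where "h f = ennreal (exp (l * \<phi> f - \<psi>))" for f
  have sel: "(\<lambda>w. 1 \<le> t \<and> P (A t w)) \<in> measurable (past t) (count_space UNIV)"
    using measurable_selection_past[of t t P] by measurable
  have Z: "Z \<in> borel_measurable (past t)"
    unfolding Z_def
    using measurable_card_selected_rounds_past[of t t P] measurable_selected_sum_past[OF \<phi>, of t t P]
    by measurable
  have h: "h \<in> borel_measurable PS"
    unfolding h_def using \<phi> by measurable
  have "(\<integral>\<^sup>+w. ennreal (exp (l * selected_sum P \<phi> (Suc t) w - \<psi> * card (selected_rounds P (Suc t) w))) \<partial>M)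
      = (\<integral>\<^sup>+w. Z w * (if 1 \<le> t \<and> P (A t w) then h (Y t w) else 1) \<partial>M)"
    unfolding exp_selected_sum_Suc by (intro nn_integral_cong) (simp add: Z_def h_def ennreal_mult)
  also have "\<dots> \<le> (\<integral>\<^sup>+w. Z w \<partial>M)"
    using nn_integral_exp_le_1_of_mgf_le[OF mgf, folded h_def] by (rule nn_integral_past_mult_if_Y_le[OF Z sel h])
  also have "\<dots> \<le> 1"
    using Suc.IH unfolding Z_def .
  finally show ?case .
qed

lemma sets_selected_sum_ge:
  assumes "\<phi> \<in> borel_measurable PS"
  shows "{w \<in> space M. card (selected_rounds P t w) = m \<and> r \<le> selected_sum P \<phi> t w} \<in> events"
proof -
  note [measurable] = measurable_selected_sum[OF assms]
  have "{w \<in> space M. real (card (selected_rounds P t w)) = real m \<and> r \<le> selected_sum P \<phi> t w} \<in> events"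
    by measurable
  then show ?thesis
    by simp
qed

lemma selected_sum_tail:
  assumes \<phi>: "\<phi> \<in> borel_measurable PS" and mgf: "mgf_le M (\<lambda>w. \<phi> (Y 0 w)) l \<psi>" and l: "l \<ge> 0"
  shows "measure M {w \<in> space M. card (selected_rounds P t w) = m \<and> r \<le> selected_sum P \<phi> t w}
    \<le> exp (real m * \<psi> - l * r)"
proof -
  define E where "E = {w \<in> space M. card (selected_rounds P t w) = m \<and> r \<le> selected_sum P \<phi> t w}"
  have E: "E \<in> events"
    unfolding E_def using \<phi> by (rule sets_selected_sum_ge)
  define c where "c = exp (l * r - real m * \<psi>)"
  have "ennreal c * indicator E w
      \<le> ennreal (exp (l * selected_sum P \<phi> t w - \<psi> * card (selected_rounds P t w)))" for w
  proof (cases "w \<in> E")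
    case True
    then have "l * r \<le> l * selected_sum P \<phi> t w"
      using l unfolding E_def by (intro mult_left_mono) auto
    with True show ?thesis
      unfolding E_def c_def by (auto intro!: ennreal_leI simp: mult.commute)
  qed simp
  then have "emeasure M E * ennreal c
      \<le> (\<integral>\<^sup>+w. ennreal (exp (l * selected_sum P \<phi> t w - \<psi> * card (selected_rounds P t w))) \<partial>M)"
    using E by (simp add: nn_integral_cmult_indicator[symmetric] mult.commute nn_integral_mono)
  also have "\<dots> \<le> 1"
    by (rule nn_integral_exp_selected_sum_le_1[OF \<phi> mgf])
  finally have "measure M E * c \<le> 1"
    by (simp add: emeasure_eq_measure c_def ennreal_mult[symmetric] ennreal_le_1)
  then show ?thesis
    unfolding E_def[symmetric] by (simp add: c_def exp_diff exp_minus field_simps)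
qed

lemma selected_sum_tail_subgaussian:
  assumes \<phi>: "\<phi> \<in> borel_measurable PS" and subg: "subgaussian M (\<lambda>w. \<phi> (Y 0 w))"
    and m: "m \<ge> 1" and L: "L \<ge> 0"
  shows "measure M {w \<in> space M. card (selected_rounds P t w) = m \<and>
      real m * sqrt (6 * L / m) \<le> selected_sum P \<phi> t w} \<le> exp (- (3 * L))"
proof -
  define l where "l = sqrt (6 * L / m)"
  have l2: "l\<^sup>2 = 6 * L / m"
    using L by (simp add: l_def)
  have "mgf_le M (\<lambda>w. \<phi> (Y 0 w)) l (l\<^sup>2 / 2)"
    using subg unfolding subgaussian_def by blast
  then have "measure M {w \<in> space M. card (selected_rounds P t w) = m \<and> real m * l \<le> selected_sum P \<phi> t w}
      \<le> exp (real m * (l\<^sup>2 / 2) - l * (real m * l))"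
    using L by (intro selected_sum_tail[OF \<phi>]) (simp_all add: l_def)
  also have "real m * (l\<^sup>2 / 2) - l * (real m * l) = - (real m * l\<^sup>2) / 2"
    by (simp add: power2_eq_square field_simps)
  also have "\<dots> = - (3 * L)"
    using m by (simp add: l2)
  finally show ?thesis
    unfolding l_def .
qed

lemma selected_sum_tail_product:
  assumes \<phi>: "\<phi> \<in> borel_measurable PS"
    and mgf: "\<And>l. \<bar>l\<bar> \<le> 1/7 \<Longrightarrow> mgf_le M (\<lambda>w. \<phi> (Y 0 w)) l (49 * l\<^sup>2)"
    and m: "m \<ge> 1" and L: "L \<ge> 0"
  shows "measure M {w \<in> space M. card (selected_rounds P t w) = m \<and>
      real m * (14 * max (3 * L / m) (sqrt (3 * L / m))) \<le> selected_sum P \<phi> t w} \<le> exp (- (3 * L))"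
proof -
  define \<epsilon> where "\<epsilon> = 14 * max (3 * L / m) (sqrt (3 * L / m))"
  define l where "l = min (\<epsilon> / 98) (1/7)"
  have "\<epsilon> \<ge> 0"
    using L by (simp add: \<epsilon>_def le_max_iff_disj)
  then have l: "0 \<le> l" "\<bar>l\<bar> \<le> 1/7"
    by (auto simp: l_def)
  have "measure M {w \<in> space M. card (selected_rounds P t w) = m \<and> real m * \<epsilon> \<le> selected_sum P \<phi> t w}
      \<le> exp (real m * (49 * l\<^sup>2) - l * (real m * \<epsilon>))"
    by (rule selected_sum_tail[OF \<phi> mgf[OF l(2)] l(1)])
  also have "\<dots> \<le> exp (- (3 * L))"
    using chernoff_exponent_product[OF m L] by (simp add: l_def \<epsilon>_def)
  finally show ?thesis
    unfolding \<epsilon>_def .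
qed

definition deviation_event :: "(nat set \<Rightarrow> bool) \<Rightarrow> ((nat \<Rightarrow> real) \<Rightarrow> real) \<Rightarrow> (nat \<Rightarrow> real) \<Rightarrow> nat \<Rightarrow> 'a set" where
  "deviation_event P \<phi> \<tau> t = {w \<in> space M. selected_rounds P t w \<noteq> {} \<and>
     \<tau> (card (selected_rounds P t w)) \<le> \<bar>selected_sum P \<phi> t w\<bar>}"

lemma deviation_event_eq_UN:
  "deviation_event P \<phi> \<tau> t = (\<Union>i\<in>{-1, 1 :: real} \<times> {1..<t}. {w \<in> space M.
     card (selected_rounds P t w) = snd i \<and> \<tau> (snd i) \<le> selected_sum P (\<lambda>f. fst i * \<phi> f) t w})"
  (is "_ = (\<Union>i\<in>?I. ?E i)")
proof (intro set_eqI iffI)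
  fix w assume "w \<in> deviation_event P \<phi> \<tau> t"
  then have w: "w \<in> space M" "selected_rounds P t w \<noteq> {}"
    and \<tau>: "\<tau> (card (selected_rounds P t w)) \<le> \<bar>selected_sum P \<phi> t w\<bar>"
    by (auto simp: deviation_event_def)
  define \<sigma> :: real where "\<sigma> = (if selected_sum P \<phi> t w \<ge> 0 then 1 else -1)"
  have "card (selected_rounds P t w) \<in> {1..<t}"
    using w(2) card_selected_rounds_le[of P t w] by (auto simp: card_gt_0_iff Suc_le_eq selected_rounds_def)
  then have "(\<sigma>, card (selected_rounds P t w)) \<in> ?I"
    by (simp add: \<sigma>_def)
  moreover have "w \<in> ?E (\<sigma>, card (selected_rounds P t w))"
    using w \<tau> by (auto simp: selected_sum_scale \<sigma>_def)
  ultimately show "w \<in> (\<Union>i\<in>?I. ?E i)"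
    by blast
next
  fix w assume "w \<in> (\<Union>i\<in>?I. ?E i)"
  then obtain i where "i \<in> ?I" "w \<in> ?E i"
    by blast
  then have "fst i = -1 \<or> fst i = 1" "snd i \<ge> 1" "w \<in> space M" "card (selected_rounds P t w) = snd i"
    and \<tau>: "\<tau> (snd i) \<le> fst i * selected_sum P \<phi> t w"
    by (auto simp: selected_sum_scale)
  moreover from this(1) \<tau> have "\<tau> (snd i) \<le> \<bar>selected_sum P \<phi> t w\<bar>"
    by auto
  ultimately show "w \<in> deviation_event P \<phi> \<tau> t"
    by (auto simp: deviation_event_def)
qed

lemma deviation_event_bound:
  assumes \<phi>: "\<phi> \<in> borel_measurable PS"
    and tail: "\<And>\<sigma> m. \<sigma> \<in> {-1, 1} \<Longrightarrow> m \<in> {1..<t} \<Longrightarrow>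
      measure M {w \<in> space M. card (selected_rounds P t w) = m \<and> \<tau> m \<le> selected_sum P (\<lambda>f. \<sigma> * \<phi> f) t w} \<le> p"
  shows "deviation_event P \<phi> \<tau> t \<in> events" and "measure M (deviation_event P \<phi> \<tau> t) \<le> 2 * real (t - 1) * p"
proof -
  define I where "I = {-1, 1 :: real} \<times> {1..<t}"
  define E where "E i = {w \<in> space M. card (selected_rounds P t w) = snd i \<and>
      \<tau> (snd i) \<le> selected_sum P (\<lambda>f. fst i * \<phi> f) t w}" for i :: "real \<times> nat"
  have eq: "deviation_event P \<phi> \<tau> t = (\<Union>i\<in>I. E i)"
    unfolding I_def E_def by (rule deviation_event_eq_UN)
  have E: "E i \<in> events" for i
    unfolding E_def using \<phi> by (intro sets_selected_sum_ge) measurable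
  show "deviation_event P \<phi> \<tau> t \<in> events"
    unfolding eq I_def using E by (intro sets.finite_UN) auto
  have "measure M (\<Union>i\<in>I. E i) \<le> (\<Sum>i\<in>I. measure M (E i))"
    using E by (intro measure_UNION_le) (auto simp: I_def)
  also have "\<dots> \<le> (\<Sum>i\<in>I. p)"
  proof (rule sum_mono)
    fix i assume "i \<in> I"
    moreover obtain \<sigma> m where i: "i = (\<sigma>, m)"
      by (cases i)
    ultimately have "\<sigma> \<in> {-1, 1}" "m \<in> {1..<t}"
      by (auto simp: I_def)
    then show "measure M (E i) \<le> p"
      unfolding E_def i fst_conv snd_conv by (rule tail)
  qed
  also have "\<dots> = 2 * real (t - 1) * p"
    by (simp add: I_def card_cartesian_product)
  finally show "measure M (deviation_event P \<phi> \<tau> t) \<le> 2 * real (t - 1) * p"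
    unfolding eq .
qed

section \<open>Confidence bounds\<close>

definition mean_threshold :: "nat \<Rightarrow> nat \<Rightarrow> real" where
  "mean_threshold t m = real m * sqrt (6 * ln t / m)"

definition product_threshold :: "nat \<Rightarrow> nat \<Rightarrow> real" where
  "product_threshold t m = real m * (14 * max (3 * ln t / m) (sqrt (3 * ln t / m)))"

lemma measurable_coordinate: "k < n \<Longrightarrow> (\<lambda>f. f k) \<in> borel_measurable PS"
  by (intro measurable_component_singleton) simp

lemma mean_deviation_event_bound:
  fixes \<mu> :: real
  assumes k: "k < n" and subg: "subgaussian M (\<lambda>w. X 0 w k - \<mu>)" and t: "t \<ge> 1"
  shows "deviation_event P (\<lambda>f. f k - \<mu>) (mean_threshold t) t \<in> events"
    and "measure M (deviation_event P (\<lambda>f. f k - \<mu>) (mean_threshold t) t) \<le> 2 * real (t - 1) / real t ^ 3"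
proof -
  note [measurable] = measurable_coordinate[OF k]
  have \<phi>: "(\<lambda>f. f k - \<mu>) \<in> borel_measurable PS"
    by measurable
  have tail: "measure M {w \<in> space M. card (selected_rounds P t w) = m \<and>
      mean_threshold t m \<le> selected_sum P (\<lambda>f. \<sigma> * (f k - \<mu>)) t w} \<le> 1 / real t ^ 3"
    if \<sigma>: "\<sigma> \<in> {-1, 1}" and m: "m \<in> {1..<t}" for \<sigma> m
  proof -
    have "subgaussian M (\<lambda>w. \<sigma> * (X 0 w k - \<mu>))"
      using \<sigma> subg subgaussian_uminus[OF subg] by auto
    then have "subgaussian M (\<lambda>w. \<sigma> * (Y 0 w k - \<mu>))"
      using k by (simp add: Y_eq_X)
    then have "measure M {w \<in> space M. card (selected_rounds P t w) = m \<and>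
        mean_threshold t m \<le> selected_sum P (\<lambda>f. \<sigma> * (f k - \<mu>)) t w} \<le> exp (- (3 * ln t))"
      unfolding mean_threshold_def using m t by (intro selected_sum_tail_subgaussian) auto
    also have "\<dots> = 1 / real t ^ 3"
      using t by (simp add: exp_neg_three_ln)
    finally show ?thesis .
  qed
  show "deviation_event P (\<lambda>f. f k - \<mu>) (mean_threshold t) t \<in> events"
    using deviation_event_bound(1)[OF \<phi> tail] .
  show "measure M (deviation_event P (\<lambda>f. f k - \<mu>) (mean_threshold t) t) \<le> 2 * real (t - 1) / real t ^ 3"
    using deviation_event_bound(2)[OF \<phi> tail] by simp
qed

lemma product_deviation_event_bound:
  fixes \<mu> :: "nat \<Rightarrow> real"
  assumes ij: "i < n" "j < n" and subg: "subgaussian M (\<lambda>w. X 0 w i - \<mu> i)" "subgaussian M (\<lambda>w. X 0 w j - \<mu> j)"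
    and t: "t \<ge> 1"
  defines "S \<equiv> \<integral>w. (X 0 w i - \<mu> i) * (X 0 w j - \<mu> j) \<partial>M"
  shows "deviation_event P (\<lambda>f. (f i - \<mu> i) * (f j - \<mu> j) - S) (product_threshold t) t \<in> events"
    and "measure M (deviation_event P (\<lambda>f. (f i - \<mu> i) * (f j - \<mu> j) - S) (product_threshold t) t)
      \<le> 2 * real (t - 1) / real t ^ 3"
proof -
  note [measurable] = measurable_coordinate[OF ij(1)] measurable_coordinate[OF ij(2)]
  have \<phi>: "(\<lambda>f. (f i - \<mu> i) * (f j - \<mu> j) - S) \<in> borel_measurable PS"
    by measurable
  have mgf: "mgf_le M (\<lambda>w. (X 0 w i - \<mu> i) * (X 0 w j - \<mu> j) - S) l (49 * l\<^sup>2)" if "\<bar>l\<bar> \<le> 1/7" for l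
    unfolding S_def using that subg by (intro subgaussian_product_mgf[OF M]) auto
  have tail: "measure M {w \<in> space M. card (selected_rounds P t w) = m \<and>
      product_threshold t m \<le> selected_sum P (\<lambda>f. \<sigma> * ((f i - \<mu> i) * (f j - \<mu> j) - S)) t w} \<le> 1 / real t ^ 3"
    if \<sigma>: "\<sigma> \<in> {-1, 1}" and m: "m \<in> {1..<t}" for \<sigma> m
  proof -
    have Y: "(\<lambda>w. (Y 0 w i - \<mu> i) * (Y 0 w j - \<mu> j) - S) = (\<lambda>w. (X 0 w i - \<mu> i) * (X 0 w j - \<mu> j) - S)"
      using ij by (simp add: Y_eq_X)
    have "mgf_le M (\<lambda>w. \<sigma> * ((Y 0 w i - \<mu> i) * (Y 0 w j - \<mu> j) - S)) l (49 * l\<^sup>2)" if "\<bar>l\<bar> \<le> 1/7" for l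
      unfolding mgf_le_cmult Y using \<sigma> mgf[of l] mgf[of "- l"] that by auto
    then have "measure M {w \<in> space M. card (selected_rounds P t w) = m \<and>
        product_threshold t m \<le> selected_sum P (\<lambda>f. \<sigma> * ((f i - \<mu> i) * (f j - \<mu> j) - S)) t w} \<le> exp (- (3 * ln t))"
      unfolding product_threshold_def using m t \<phi> by (intro selected_sum_tail_product) auto
    also have "\<dots> = 1 / real t ^ 3"
      using t by (simp add: exp_neg_three_ln)
    finally show ?thesis .
  qed
  show "deviation_event P (\<lambda>f. (f i - \<mu> i) * (f j - \<mu> j) - S) (product_threshold t) t \<in> events"
    using deviation_event_bound(1)[OF \<phi> tail] .
  show "measure M (deviation_event P (\<lambda>f. (f i - \<mu> i) * (f j - \<mu> j) - S) (product_threshold t) t)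
      \<le> 2 * real (t - 1) / real t ^ 3"
    using deviation_event_bound(2)[OF \<phi> tail] by simp
qed

lemma Ncnt_eq: "Ncnt A t i w = card (selected_rounds (\<lambda>S. i \<in> S) t w)"
  by (simp add: Ncnt_def selected_rounds_def)

lemma Npair_eq: "Npair A t i j w = card (selected_rounds (\<lambda>S. i \<in> S \<and> j \<in> S) t w)"
  by (simp add: Npair_def selected_rounds_def)

lemma emp_mean_eq: "emp_mean A X t i w =
    (\<Sum>v\<in>selected_rounds (\<lambda>S. i \<in> S) t w. X v w i) / card (selected_rounds (\<lambda>S. i \<in> S) t w)"
  unfolding emp_mean_def Ncnt_eq selected_rounds_def by (subst sum.inter_filter[symmetric]) simp_all

lemma emp_cov_eq: "emp_cov A X t i j w =
    (\<Sum>v\<in>selected_rounds (\<lambda>S. i \<in> S \<and> j \<in> S) t w. (X v w i - emp_mean A X t i w) * (X v w j - emp_mean A X t j w))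
      / card (selected_rounds (\<lambda>S. i \<in> S \<and> j \<in> S) t w)"
  unfolding emp_cov_def Npair_eq selected_rounds_def by (subst sum.inter_filter[symmetric]) simp_all

lemma emp_cov_eq_centred:
  fixes \<mu> :: "nat \<Rightarrow> real"
  assumes "selected_rounds (\<lambda>T. i \<in> T) t w \<noteq> {}" "selected_rounds (\<lambda>T. j \<in> T) t w \<noteq> {}"
  shows "emp_cov A X t i j w = (\<Sum>v\<in>selected_rounds (\<lambda>T. i \<in> T \<and> j \<in> T) t w.
      (X v w i - \<mu> i - (\<Sum>u\<in>selected_rounds (\<lambda>T. i \<in> T) t w. X u w i - \<mu> i) / card (selected_rounds (\<lambda>T. i \<in> T) t w))
      * (X v w j - \<mu> j - (\<Sum>u\<in>selected_rounds (\<lambda>T. j \<in> T) t w. X u w j - \<mu> j) / card (selected_rounds (\<lambda>T. j \<in> T) t w)))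
    / card (selected_rounds (\<lambda>T. i \<in> T \<and> j \<in> T) t w)"
proof -
  have "emp_mean A X t k w = \<mu> k + (\<Sum>v\<in>selected_rounds (\<lambda>T. k \<in> T) t w. X v w k - \<mu> k)
      / card (selected_rounds (\<lambda>T. k \<in> T) t w)" if "selected_rounds (\<lambda>T. k \<in> T) t w \<noteq> {}" for k
    using that by (simp add: emp_mean_eq sum_subtractf field_simps)
  from this[OF assms(1)] this[OF assms(2)] show ?thesis
    unfolding emp_cov_eq by (simp add: algebra_simps)
qed

lemma measurable_member_A[measurable]: "(\<lambda>w. k \<in> A v w) \<in> measurable M (count_space UNIV)"
  by (rule measurable_compose[OF measurable_A measurable_count_space])

lemma measurable_Ncnt[measurable]: "(\<lambda>w. real (Ncnt A t i w)) \<in> borel_measurable M"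
  unfolding Ncnt_eq by (rule measurable_card_selected_rounds)

lemma measurable_Npair[measurable]: "(\<lambda>w. real (Npair A t i j w)) \<in> borel_measurable M"
  unfolding Npair_eq by (rule measurable_card_selected_rounds)

lemma measurable_emp_cov[measurable]: "(\<lambda>w. emp_cov A X t i j w) \<in> borel_measurable M"
  unfolding emp_cov_def emp_mean_def by measurable

lemma measurable_gwidth[measurable]: "(\<lambda>w. gwidth A t i j w) \<in> borel_measurable M"
  unfolding gwidth_def Let_def by measurable

lemma abs_selected_sum_le:
  assumes "w \<in> space M" "selected_rounds P t w \<noteq> {}" "w \<notin> deviation_event P \<phi> \<tau> t"
  shows "\<bar>selected_sum P \<phi> t w\<bar> \<le> \<tau> (card (selected_rounds P t w))"
  using assms by (auto simp: deviation_event_def)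

lemma covariance_deviation_outside_events:
  fixes \<mu> :: "nat \<Rightarrow> real" and S :: real
  assumes ij: "i < n" "j < n" and w: "w \<in> space M" and N: "Npair A t i j w \<ge> 1"
    and good_i: "w \<notin> deviation_event (\<lambda>T. i \<in> T) (\<lambda>f. f i - \<mu> i) (mean_threshold t) t"
    and good_j: "w \<notin> deviation_event (\<lambda>T. j \<in> T) (\<lambda>f. f j - \<mu> j) (mean_threshold t) t"
    and good_ij_i: "w \<notin> deviation_event (\<lambda>T. i \<in> T \<and> j \<in> T) (\<lambda>f. f i - \<mu> i) (mean_threshold t) t"
    and good_ij_j: "w \<notin> deviation_event (\<lambda>T. i \<in> T \<and> j \<in> T) (\<lambda>f. f j - \<mu> j) (mean_threshold t) t"
    and good_prod: "w \<notin> deviation_event (\<lambda>T. i \<in> T \<and> j \<in> T)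
      (\<lambda>f. (f i - \<mu> i) * (f j - \<mu> j) - S) (product_threshold t) t"
    and t: "t \<ge> 1"
  shows "\<bar>S - emp_cov A X t i j w\<bar> \<le> gwidth A t i j w"
proof -
  define Si where "Si = selected_rounds (\<lambda>T. i \<in> T) t w"
  define Sj where "Sj = selected_rounds (\<lambda>T. j \<in> T) t w"
  define Sij where "Sij = selected_rounds (\<lambda>T. i \<in> T \<and> j \<in> T) t w"
  define x where "x v = X v w i - \<mu> i" for v
  define y where "y v = X v w j - \<mu> j" for v
  have sub: "Sij \<subseteq> Si" "Sij \<subseteq> Sj"
    by (auto simp: Si_def Sj_def Sij_def selected_rounds_def)
  have ne: "Sij \<noteq> {}" "Si \<noteq> {}" "Sj \<noteq> {}"
    using N sub by (auto simp: Npair_eq Sij_def)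
  have sums: "selected_sum (\<lambda>T. i \<in> T) (\<lambda>f. f i - \<mu> i) t w = (\<Sum>v\<in>Si. x v)"
    "selected_sum (\<lambda>T. j \<in> T) (\<lambda>f. f j - \<mu> j) t w = (\<Sum>v\<in>Sj. y v)"
    "selected_sum (\<lambda>T. i \<in> T \<and> j \<in> T) (\<lambda>f. f i - \<mu> i) t w = (\<Sum>v\<in>Sij. x v)"
    "selected_sum (\<lambda>T. i \<in> T \<and> j \<in> T) (\<lambda>f. f j - \<mu> j) t w = (\<Sum>v\<in>Sij. y v)"
    "selected_sum (\<lambda>T. i \<in> T \<and> j \<in> T) (\<lambda>f. (f i - \<mu> i) * (f j - \<mu> j) - S) t w = (\<Sum>v\<in>Sij. x v * y v - S)"
    using ij by (simp_all add: selected_sum_def Si_def Sj_def Sij_def x_def y_def Y_eq_X)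
  have bound: "\<bar>S - (\<Sum>v\<in>Sij. (x v - (\<Sum>v\<in>Si. x v) / card Si) * (y v - (\<Sum>v\<in>Sj. y v) / card Sj)) / card Sij\<bar>
     \<le> 16 * max (3 * ln t / card Sij) (sqrt (3 * ln t / card Sij))
       + sqrt (48 * (ln t)\<^sup>2 / (real (card Sij) * real (card Si))) + sqrt (36 * (ln t)\<^sup>2 / (real (card Sij) * real (card Sj)))"
  proof (rule empirical_covariance_deviation)
    show "\<bar>\<Sum>v\<in>Si. x v\<bar> \<le> real (card Si) * sqrt (6 * ln t / real (card Si))"
      using abs_selected_sum_le[OF w _ good_i] ne sums by (simp add: Si_def mean_threshold_def)
    show "\<bar>\<Sum>v\<in>Sj. y v\<bar> \<le> real (card Sj) * sqrt (6 * ln t / real (card Sj))"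
      using abs_selected_sum_le[OF w _ good_j] ne sums by (simp add: Sj_def mean_threshold_def)
    show "\<bar>\<Sum>v\<in>Sij. x v\<bar> \<le> real (card Sij) * sqrt (6 * ln t / real (card Sij))"
      using abs_selected_sum_le[OF w _ good_ij_i] ne sums by (simp add: Sij_def mean_threshold_def)
    show "\<bar>\<Sum>v\<in>Sij. y v\<bar> \<le> real (card Sij) * sqrt (6 * ln t / real (card Sij))"
      using abs_selected_sum_le[OF w _ good_ij_j] ne sums by (simp add: Sij_def mean_threshold_def)
    show "\<bar>\<Sum>v\<in>Sij. x v * y v - S\<bar> \<le> real (card Sij) * (14 * max (3 * ln t / real (card Sij)) (sqrt (3 * ln t / real (card Sij))))"
      using abs_selected_sum_le[OF w _ good_prod] ne sums by (simp add: Sij_def product_threshold_def)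
  qed (use sub ne t in \<open>auto simp: Si_def Sj_def\<close>)
  have "emp_cov A X t i j w
      = (\<Sum>v\<in>Sij. (x v - (\<Sum>v\<in>Si. x v) / card Si) * (y v - (\<Sum>v\<in>Sj. y v) / card Sj)) / card Sij"
    using emp_cov_eq_centred[OF ne(2,3)[unfolded Si_def Sj_def], of \<mu>]
    by (simp add: Si_def Sj_def Sij_def x_def y_def)
  moreover have "gwidth A t i j w = 16 * max (3 * ln t / card Sij) (sqrt (3 * ln t / card Sij))
       + sqrt (48 * (ln t)\<^sup>2 / (real (card Sij) * real (card Si))) + sqrt (36 * (ln t)\<^sup>2 / (real (card Sij) * real (card Sj)))"
    by (simp add: gwidth_def Let_def Ncnt_eq Npair_eq Si_def Sj_def Sij_def)
  ultimately show ?thesis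
    using bound by simp
qed

lemma sets_covariance_bound_event:
  "{w \<in> space M. Npair A t i j w \<ge> 1 \<longrightarrow> \<bar>S - emp_cov A X t i j w\<bar> \<le> gwidth A t i j w} \<in> events"
proof -
  have "{w \<in> space M. 1 \<le> real (Npair A t i j w) \<longrightarrow> \<bar>S - emp_cov A X t i j w\<bar> \<le> gwidth A t i j w} \<in> events"
    by measurable
  then show ?thesis
    by simp
qed

lemma covariance_confidence:
  fixes \<mu> :: "nat \<Rightarrow> real"
  assumes ij: "i < n" "j < n"
    and subg: "subgaussian M (\<lambda>w. X 0 w i - \<mu> i)" "subgaussian M (\<lambda>w. X 0 w j - \<mu> j)"
    and t: "t \<ge> 2"
  defines "S \<equiv> \<integral>w. (X 0 w i - \<mu> i) * (X 0 w j - \<mu> j) \<partial>M"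
  shows "measure M {w \<in> space M. Npair A t i j w \<ge> 1 \<longrightarrow> \<bar>S - emp_cov A X t i j w\<bar> \<le> gwidth A t i j w}
    \<ge> 1 - 10 / (real t)\<^sup>2"
proof -
  have t1: "t \<ge> 1"
    using t by simp
  define Ei where "Ei = deviation_event (\<lambda>T. i \<in> T) (\<lambda>f. f i - \<mu> i) (mean_threshold t) t"
  define Ej where "Ej = deviation_event (\<lambda>T. j \<in> T) (\<lambda>f. f j - \<mu> j) (mean_threshold t) t"
  define Eiji where "Eiji = deviation_event (\<lambda>T. i \<in> T \<and> j \<in> T) (\<lambda>f. f i - \<mu> i) (mean_threshold t) t"
  define Eijj where "Eijj = deviation_event (\<lambda>T. i \<in> T \<and> j \<in> T) (\<lambda>f. f j - \<mu> j) (mean_threshold t) t"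
  define Eprod where "Eprod = deviation_event (\<lambda>T. i \<in> T \<and> j \<in> T)
      (\<lambda>f. (f i - \<mu> i) * (f j - \<mu> j) - S) (product_threshold t) t"
  define \<E> where "\<E> = set [Ei, Ej, Eiji, Eijj, Eprod]"
  have \<E>: "E \<in> events" "measure M E \<le> 2 * real (t - 1) / real t ^ 3" if "E \<in> \<E>" for E
    using that mean_deviation_event_bound[OF ij(1) subg(1) t1] mean_deviation_event_bound[OF ij(2) subg(2) t1]
      product_deviation_event_bound[OF ij subg t1]
    by (auto simp: \<E>_def Ei_def Ej_def Eiji_def Eijj_def Eprod_def S_def)
  have "card \<E> \<le> 5"
    using card_length[of "[Ei, Ej, Eiji, Eijj, Eprod]"] by (simp add: \<E>_def)
  have "measure M (\<Union>\<E>) \<le> card \<E> * (2 * real (t - 1) / real t ^ 3)"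
    using \<E> by (intro measure_Union_le_card_mult) (auto simp: \<E>_def)
  also have "\<dots> \<le> 5 * (2 * real (t - 1) / real t ^ 3)"
    using \<open>card \<E> \<le> 5\<close> by (intro mult_right_mono) auto
  also have "\<dots> = 10 * (real (t - 1) / real t ^ 3)"
    by simp
  also have "\<dots> \<le> 10 * (real t / real t ^ 3)"
    by (intro mult_left_mono divide_right_mono) auto
  also have "real t / real t ^ 3 = 1 / (real t)\<^sup>2"
    using t by (simp add: power2_eq_square power3_eq_cube)
  finally have bad: "measure M (\<Union>\<E>) \<le> 10 / (real t)\<^sup>2"
    by simp
  have bad_sets: "\<Union>\<E> \<in> events"
    using \<E> by (intro sets.finite_Union) (auto simp: \<E>_def)
  have "space M - \<Union>\<E> \<subseteq> {w \<in> space M. Npair A t i j w \<ge> 1 \<longrightarrow> \<bar>S - emp_cov A X t i j w\<bar> \<le> gwidth A t i j w}"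
    using covariance_deviation_outside_events[OF ij _ _ _ _ _ _ _ t1] by (auto simp: \<E>_def Ei_def Ej_def Eiji_def Eijj_def Eprod_def)
  moreover have "{w \<in> space M. Npair A t i j w \<ge> 1 \<longrightarrow> \<bar>S - emp_cov A X t i j w\<bar> \<le> gwidth A t i j w} \<in> events"
    by (rule sets_covariance_bound_event)
  ultimately have "measure M (space M - \<Union>\<E>)
      \<le> measure M {w \<in> space M. Npair A t i j w \<ge> 1 \<longrightarrow> \<bar>S - emp_cov A X t i j w\<bar> \<le> gwidth A t i j w}"
    by (intro finite_measure_mono) auto
  moreover have "measure M (space M - \<Union>\<E>) \<ge> 1 - 10 / (real t)\<^sup>2"
    using prob_compl[OF bad_sets] bad by simp
  ultimately show ?thesis
    by linarith
qed

end

theorem proposition2: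
  fixes M :: "'a measure" and MR :: "'r measure" and R :: "'a \<Rightarrow> 'r"
    and n :: nat and \<A> :: "nat set set"
    and X :: "nat \<Rightarrow> 'a \<Rightarrow> nat \<Rightarrow> real"
    and A :: "nat \<Rightarrow> 'a \<Rightarrow> nat set"
    and \<mu> :: "nat \<Rightarrow> real" and \<Sigma> :: "nat \<Rightarrow> nat \<Rightarrow> real"
    and t i j :: nat
  assumes M: "prob_space M"
    and actions: "\<forall>S\<in>\<A>. S \<noteq> {} \<and> S \<subseteq> {..<n}"
    and X_meas: "\<And>u k. (\<lambda>w. X u w k) \<in> borel_measurable M"
    and X_indep: "prob_space.indep_vars M (\<lambda>_. PiM {..<n} (\<lambda>_. borel))
                    (\<lambda>u w. restrict (X u w) {..<n}) UNIV"
    and X_ident: "\<And>u. distr M (PiM {..<n} (\<lambda>_. borel)) (\<lambda>w. restrict (X u w) {..<n})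
                       = distr M (PiM {..<n} (\<lambda>_. borel)) (\<lambda>w. restrict (X 0 w) {..<n})"
    and R_meas: "R \<in> measurable M MR"
    and R_indep: "prob_space.indep_set M
                    {R -` B \<inter> space M | B. B \<in> sets MR}
                    {(\<lambda>w u. restrict (X u w) {..<n}) -` C \<inter> space M | C.
                       C \<in> sets (PiM UNIV (\<lambda>_. PiM {..<n} (\<lambda>_. borel)))}"
    and A_in: "\<And>u w. w \<in> space M \<Longrightarrow> A u w \<in> \<A>"
    and A_adapted: "\<And>u S. {w \<in> space M. A u w = S} \<in> hist_events M MR R A X u"
    and mu_def: "\<And>k. \<mu> k = integral\<^sup>L M (\<lambda>w. X 0 w k)"
    and Sigma_def: "\<And>k l. \<Sigma> k l = integral\<^sup>L M (\<lambda>w. (X 0 w k - \<mu> k) * (X 0 w l - \<mu> l))"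
    and subgauss: "\<And>k s. k < n \<Longrightarrow>
                     integrable M (\<lambda>w. exp (s * (X 0 w k - \<mu> k))) \<and>
                     integral\<^sup>L M (\<lambda>w. exp (s * (X 0 w k - \<mu> k))) \<le> exp (s\<^sup>2 / 2)"
    and t: "t \<ge> 2"
    and ij: "i < n" "j < n"
  shows "measure M {w \<in> space M. Npair A t i j w \<ge> 1 \<longrightarrow>
             \<bar>\<Sigma> i j - emp_cov A X t i j w\<bar> \<le> gwidth A t i j w}
           \<ge> 1 - 10 / (real t)\<^sup>2
       \<and> measure M {w \<in> space M. Npair A t i j w \<ge> 1 \<longrightarrow>
             (let \<Sigma>t = emp_cov A X t i j w + gwidth A t i j w in
               0 \<le> \<Sigma>t - \<Sigma> i j \<and> \<Sigma>t - \<Sigma> i j \<le> 2 * gwidth A t i j w)}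
           \<ge> 1 - 10 / (real t)\<^sup>2"
proof -
  interpret semi_bandit M MR R n \<A> X A
    by (rule semi_bandit.intro) (fact M actions X_meas X_indep X_ident R_meas R_indep A_in A_adapted)+
  have subg: "subgaussian M (\<lambda>w. X 0 w k - \<mu> k)" if "k < n" for k
    using subgauss[OF that] by (simp add: subgaussian_def mgf_le_def)
  have "measure M {w \<in> space M. Npair A t i j w \<ge> 1 \<longrightarrow> \<bar>\<Sigma> i j - emp_cov A X t i j w\<bar> \<le> gwidth A t i j w}
      \<ge> 1 - 10 / (real t)\<^sup>2"
    using covariance_confidence[OF ij subg[OF ij(1)] subg[OF ij(2)] t] by (simp add: Sigma_def)
  moreover have "{w \<in> space M. Npair A t i j w \<ge> 1 \<longrightarrow>
      (let \<Sigma>t = emp_cov A X t i j w + gwidth A t i j w in 0 \<le> \<Sigma>t - \<Sigma> i j \<and> \<Sigma>t - \<Sigma> i j \<le> 2 * gwidth A t i j w)}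
    = {w \<in> space M. Npair A t i j w \<ge> 1 \<longrightarrow> \<bar>\<Sigma> i j - emp_cov A X t i j w\<bar> \<le> gwidth A t i j w}"
    by (auto simp: Let_def abs_le_iff)
  ultimately show ?thesis
    by simp
qed

end
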